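(* Let $\Omega\subset\mathbb{R}^d$ be a bounded domain, $p\ge1$ an integer, and $T$ an invertible real $d\times d$ matrix. If $\Omega$ admits $p$-frames, then $$F_p(s^2(T))=\frac{I_{2p}(T(\Omega))}{I_{2p}(\Omega)}\cdot\frac{V(\Omega)^{1+4p/d}}{V(T^{-1}(\Omega))^{2p/d}\,V(T(\Omega))^{1+2p/d}}.$$ Furthermore, if $\Omega$ has irreducible isometry group, then $$\frac{1}{d^p}\|T\|_{HS}^{2p}\le\frac{I_{2p}(T(\Omega))}{I_{2p}(\Omega)}\cdot\frac{V(\Omega)^{1+4p/d}}{V(T^{-1}(\Omega))^{2p/d}\,V(T(\Omega))^{1+2p/d}}\le\frac1d\|T\|_{2p}^{2p}.$$
   Context: $G_\Omega=\{U\in O(d):U(\Omega)=\Omega\}$. $\Omega$ admits $p$-frames if every $G_\Omega$-invariant homogeneous polynomial of degree $2p$ on $\mathbb{R}^d$ is a scalar multiple of $|x|^{2p}$; it has irreducible isometry group if the only $G_\Omega$-invariant subspaces are $\{0\}$ and $\mathbb{R}^d$. $V(D)$ is volume and $I_{2p}(D)=\int_D|x|^{2p}dx$. $s^2(T)$ is the multiset of eigenvalues of $T^\dagger T$, $F_p(s^2(T))=\int_{S^{d-1}}|T\theta|^{2p}d\sigma(\theta)$ with $\sigma$ normalized uniform measure on the sphere. $\|T\|_n=(\sum s_i^n)^{1/n}$ is the Schatten norm, $\|T\|_{HS}=\|T\|_2$. *)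

theory Defs
  imports "HOL-Analysis.Analysis"
begin

text \<open>Dimension d = CARD('n); vectors are real^'n, matrices real^'n^'n.\<close>

definition isometry_group :: "(real^'n) set \<Rightarrow> (real^'n^'n) set" where
  "isometry_group \<Omega> = {U. orthogonal_matrix U \<and> (\<lambda>x. U *v x) ` \<Omega> = \<Omega>}"

definition homogeneous_poly :: "nat \<Rightarrow> (real^'n \<Rightarrow> real) \<Rightarrow> bool" where
  "homogeneous_poly k f \<longleftrightarrow>
     (\<exists>c :: ('n \<Rightarrow> nat) \<Rightarrow> real. \<forall>x.
        f x = (\<Sum>\<alpha>\<in>{\<alpha>. sum \<alpha> UNIV = k}. c \<alpha> * (\<Prod>i\<in>UNIV. (x $ i) ^ \<alpha> i)))"

definition admits_p_frames :: "nat \<Rightarrow> (real^'n) set \<Rightarrow> bool" where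
  "admits_p_frames p \<Omega> \<longleftrightarrow>
     (\<forall>f. homogeneous_poly (2*p) f \<and> (\<forall>U\<in>isometry_group \<Omega>. \<forall>x. f (U *v x) = f x)
          \<longrightarrow> (\<exists>c::real. \<forall>x. f x = c * norm x ^ (2*p)))"

definition irreducible_isometry_group :: "(real^'n) set \<Rightarrow> bool" where
  "irreducible_isometry_group \<Omega> \<longleftrightarrow>
     (\<forall>W. subspace W \<and> (\<forall>U\<in>isometry_group \<Omega>. (\<lambda>x. U *v x) ` W \<subseteq> W)
          \<longrightarrow> W = {0} \<or> W = UNIV)"

definition vol :: "(real^'n) set \<Rightarrow> real" where
  "vol D = measure lebesgue D"

definition I_moment :: "nat \<Rightarrow> (real^'n) set \<Rightarrow> real" where
  "I_moment k D = integral D (\<lambda>x. norm x ^ k)"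

text \<open>Normalized uniform measure sigma on the unit sphere: the push-forward of the
  uniform probability measure on the unit ball under radial projection x |-> x/|x|
  (the cone-measure construction of normalized surface measure).\<close>
definition sphere_measure :: "(real^'n) measure" where
  "sphere_measure = distr (uniform_measure lborel (ball 0 1)) borel (\<lambda>x. x /\<^sub>R norm x)"

text \<open>F_p(s^2(T)) = integral over S^(d-1) of |T theta|^(2p) d sigma(theta).\<close>
definition F_p :: "nat \<Rightarrow> real^'n^'n \<Rightarrow> real" where
  "F_p p T = (\<integral>\<theta>. norm (T *v \<theta>) ^ (2*p) \<partial>sphere_measure)"

definition sq_singular_values :: "real^'n^'n \<Rightarrow> ('n \<Rightarrow> real)" where
  "sq_singular_values T = (SOME ev. \<exists>U. orthogonal_matrix U \<and>
      transpose U ** (transpose T ** T) ** U = (\<chi> i j. if i = j then ev i else 0))"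

definition singular_values :: "real^'n^'n \<Rightarrow> ('n \<Rightarrow> real)" where
  "singular_values T = (\<lambda>i. sqrt (sq_singular_values T i))"

definition schatten :: "nat \<Rightarrow> real^'n^'n \<Rightarrow> real" where
  "schatten n T = (\<Sum>i\<in>UNIV. singular_values T i ^ n) powr (1 / real n)"

definition hs_norm :: "real^'n^'n \<Rightarrow> real" where
  "hs_norm T = schatten 2 T"

end

theory Submission
  imports Defs "HOL-Probability.Probability_Measure"
begin

text \<open>
  Let \<open>k = 2p\<close>. The function \<open>h y = \<integral>\<^sub>\<Omega> (x \<bullet> y)\<^sup>k dx\<close> is a homogeneous polynomial of degree \<open>k\<close>
  invariant under the isometry group of \<open>\<Omega>\<close>, so by the frame property \<open>h y = c \<parallel>y\<parallel>\<^sup>k\<close>. Averaging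
  \<open>((T x) \<bullet> \<theta>)\<^sup>k = (x \<bullet> T\<^sup>t \<theta>)\<^sup>k\<close> over the sphere gives \<open>\<kappa> \<parallel>T x\<parallel>\<^sup>k\<close> with \<open>\<kappa> > 0\<close>, and interchanging the
  two integrals (legitimate since everything is a finite sum of products of monomials) yields
  \<open>\<kappa> \<integral>\<^sub>\<Omega> \<parallel>T x\<parallel>\<^sup>k = c F\<^sub>p(T\<^sup>t) = c F\<^sub>p(T)\<close>. Taking \<open>T = 1\<close> identifies \<open>c = \<kappa> I\<^sub>k(\<Omega>)\<close>, hence
  \<open>\<integral>\<^sub>\<Omega> \<parallel>T x\<parallel>\<^sup>k = I\<^sub>k(\<Omega>) F\<^sub>p(T)\<close>; the linear changes of variables \<open>x \<mapsto> T x\<close> and \<open>x \<mapsto> T\<^sup>-\<^sup>1 x\<close> turn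
  this into the stated ratio of moments and volumes, in which all Jacobian factors cancel.

  For the bounds, diagonalise \<open>T\<^sup>t T\<close> by a rotation: \<open>F\<^sub>p(T) = \<integral> (\<Sum>\<^sub>i s\<^sub>i\<^sup>2 \<theta>\<^sub>i\<^sup>2)\<^sup>p d\<sigma>\<close>, and each
  \<open>\<theta>\<^sub>i\<^sup>2\<close> has mean \<open>1/d\<close>. Jensen's inequality for the integral gives the lower bound, Jensen's inequality
  for the weights \<open>\<theta>\<^sub>i\<^sup>2\<close> (which sum to at most 1) the upper one. These bounds hold for every \<open>T\<close>.
\<close>

section \<open>Integrals of bounded functions over bounded sets\<close>

lemma bounded_continuous_image_bound:
  fixes f :: "'a::euclidean_space \<Rightarrow> 'b::real_normed_vector"
  assumes "continuous_on UNIV f" and "bounded A"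
  obtains C where "\<And>x. x \<in> A \<Longrightarrow> norm (f x) \<le> C"
proof -
  have "bounded (f ` closure A)"
    using assms by (intro compact_imp_bounded compact_continuous_image)
      (auto intro: continuous_on_subset simp: compact_closure)
  then show ?thesis
    using that closure_subset by (fastforce simp: bounded_iff)
qed

lemma set_integrable_bounded_measurable:
  fixes f :: "'a::euclidean_space \<Rightarrow> 'b::euclidean_space"
  assumes [measurable]: "f \<in> borel_measurable borel" "A \<in> sets borel"
    and bound: "\<And>x. x \<in> A \<Longrightarrow> norm (f x) \<le> C" and "bounded A"
  shows "set_integrable lborel A f"
proof -
  obtain r where "0 < r" "A \<subseteq> ball 0 r"
    using bounded_subset_ballD[OF \<open>bounded A\<close>, of 0] by blast
  then have "emeasure lborel A \<le> emeasure lborel (cball (0::'a) r)"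
    by (intro emeasure_mono) auto
  then have "emeasure lborel A < \<infinity>"
    using emeasure_lborel_cball_finite[of "0::'a" r] by (simp add: order_le_less_trans)
  then show ?thesis
    unfolding set_integrable_def
    by (intro integrableI_bounded_set_indicator[where B=C]) (use bound in auto)
qed

lemma integrable_on_bounded_measurable:
  fixes f :: "'a::euclidean_space \<Rightarrow> 'b::euclidean_space"
  assumes "f \<in> borel_measurable borel" "A \<in> sets borel"
    and "\<And>x. x \<in> A \<Longrightarrow> norm (f x) \<le> C" and "bounded A"
  shows "f integrable_on A"
  using set_borel_integral_eq_integral(1)[OF set_integrable_bounded_measurable[OF assms]] .

lemma integrable_on_continuous_bounded:
  fixes f :: "'a::euclidean_space \<Rightarrow> 'b::euclidean_space"
  assumes "continuous_on UNIV f" "A \<in> sets borel" "bounded A"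
  shows "f integrable_on A"
proof -
  obtain C where "\<And>x. x \<in> A \<Longrightarrow> norm (f x) \<le> C"
    using bounded_continuous_image_bound assms by metis
  with assms show ?thesis
    by (intro integrable_on_bounded_measurable) (auto intro: borel_measurable_continuous_onI)
qed

lemma integral_transfer_lborel:
  fixes \<psi> :: "'a::euclidean_space \<Rightarrow> 'b::euclidean_space" and f :: "'b \<Rightarrow> real"
  assumes distr: "lborel = distr lborel borel \<psi>" and [measurable]: "\<psi> \<in> borel_measurable borel"
    and inverse: "\<And>x. \<phi> (\<psi> x) = x" "\<And>y. \<psi> (\<phi> y) = y"
    and [measurable]: "f \<in> borel_measurable borel" "B \<in> sets borel"
    and bound: "\<And>x. x \<in> B \<Longrightarrow> norm (f x) \<le> C" and "bounded B"
  shows "integral B f = integral (\<phi> ` B) (\<lambda>x. f (\<psi> x))"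
proof -
  have ind: "indicator B (\<psi> x) = (indicator (\<phi> ` B) x :: real)" for x
    by (metis image_eqI indicator_simps imageE inverse)
  have "integrable (distr lborel borel \<psi>) (\<lambda>y. indicator B y *\<^sub>R f y)"
    using set_integrable_bounded_measurable[of f B C] bound \<open>bounded B\<close> distr
    by (simp add: set_integrable_def)
  then have int: "set_integrable lborel (\<phi> ` B) (\<lambda>x. f (\<psi> x))"
    by (simp add: integrable_distr_eq set_integrable_def ind)
  have "integral B f = (LINT y:B|lborel. f y)"
    using set_borel_integral_eq_integral(2)[OF set_integrable_bounded_measurable[of f B C]]
      bound \<open>bounded B\<close> by simp
  also have "\<dots> = integral\<^sup>L (distr lborel borel \<psi>) (\<lambda>y. indicator B y *\<^sub>R f y)"
    unfolding set_lebesgue_integral_def using distr by simp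
  also have "\<dots> = (LINT x:(\<phi> ` B)|lborel. f (\<psi> x))"
    by (simp add: integral_distr set_lebesgue_integral_def ind)
  also have "\<dots> = integral (\<phi> ` B) (\<lambda>x. f (\<psi> x))"
    using set_borel_integral_eq_integral(2)[OF int] .
  finally show ?thesis .
qed

lemma exists_nonzero_in_open:
  fixes \<Omega> :: "'a::euclidean_space set"
  assumes "open \<Omega>" "\<Omega> \<noteq> {}"
  obtains a where "a \<in> \<Omega>" "a \<noteq> 0"
proof -
  have "\<not> \<Omega> \<subseteq> {0}"
    using assms finite_imp_not_open finite_subset by blast
  then show ?thesis
    using that by blast
qed

lemma integral_pos_continuous_open:
  fixes f :: "'a::euclidean_space \<Rightarrow> real"
  assumes "open \<Omega>" "bounded \<Omega>" and f: "continuous_on UNIV f"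
    and nonneg: "\<And>x. x \<in> \<Omega> \<Longrightarrow> 0 \<le> f x" and "a \<in> \<Omega>" "0 < f a"
  shows "0 < integral \<Omega> f"
proof -
  have "open (\<Omega> \<inter> {x. f a / 2 < f x})"
    using f \<open>open \<Omega>\<close> by (intro open_Int open_Collect_less) (auto intro: continuous_intros)
  moreover have "a \<in> \<Omega> \<inter> {x. f a / 2 < f x}"
    using \<open>a \<in> \<Omega>\<close> \<open>0 < f a\<close> by simp
  ultimately obtain r where "0 < r" and r: "ball a r \<subseteq> \<Omega> \<inter> {x. f a / 2 < f x}"
    using open_contains_ball by blast
  have int: "f integrable_on S" if "S \<subseteq> \<Omega>" "S \<in> sets borel" for S
    using that \<open>bounded \<Omega>\<close> bounded_subset by (intro integrable_on_continuous_bounded f) auto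
  have "0 < f a / 2 * measure lebesgue (ball a r)"
    using \<open>0 < f a\<close> content_ball_pos[OF \<open>0 < r\<close>, of a] by (simp add: measure_completion)
  also have "\<dots> = integral (ball a r) (\<lambda>_. f a / 2)"
    using integral_cmul[of "ball a r" "f a / 2" "\<lambda>_. 1::real"]
    by (simp add: lmeasure_integral[symmetric] bounded_set_imp_lmeasurable)
  also have "\<dots> \<le> integral (ball a r) f"
    using r f by (intro integral_le integrable_on_continuous_bounded) auto
  also have "\<dots> \<le> integral \<Omega> f"
    using r int \<open>open \<Omega>\<close> nonneg by (intro integral_subset_le) (auto simp: borel_open)
  finally show ?thesis .
qed

section \<open>Linear change of variables\<close>

lemma open_bounded_linear_image:
  fixes L :: "'a::euclidean_space \<Rightarrow> 'b::euclidean_space"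
  assumes "linear L" "surj L" "open S" "bounded S"
  shows "open (L ` S)" "bounded (L ` S)"
  using assms open_surjective_linear_image bounded_linear_image linear_conv_bounded_linear by blast+

lemma integral_linear_image_wellorder:
  fixes M :: "real^'m::{finite,wellorder} \<Rightarrow> real^'m::{finite,wellorder}"
    and g :: "real^'m::{finite,wellorder} \<Rightarrow> real"
  assumes "linear M" "surj M" "open A" "bounded A"
    and [measurable]: "g \<in> borel_measurable borel"
    and bound: "\<And>y. y \<in> M ` A \<Longrightarrow> norm (g y) \<le> C"
  shows "integral (M ` A) g = \<bar>det (matrix M)\<bar> * integral A (\<lambda>x. g (M x))"
proof -
  \<comment> \<open>the library theorem is stated for vector-valued functions, so pass through \<open>real^1\<close>\<close>
  define G where "G y = g y *\<^sub>R ((\<chi> i. 1) :: real^1)" for y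
  have MA: "open (M ` A)" "bounded (M ` A)"
    using open_bounded_linear_image assms by blast+
  have [measurable]: "G \<in> borel_measurable borel" "M \<in> borel_measurable borel"
    using \<open>linear M\<close> unfolding G_def
    by (auto intro!: borel_measurable_continuous_onI linear_continuous_on simp: linear_conv_bounded_linear)
  have G_bound: "norm (G y) \<le> C" if "y \<in> M ` A" for y
    using that bound by (auto simp: G_def norm_real)
  then have "set_integrable lborel (M ` A) G"
    using MA by (intro set_integrable_bounded_measurable) (auto simp: borel_open)
  then have "G absolutely_integrable_on M ` A"
    using MA unfolding set_integrable_def by (subst integrable_completion) (auto simp: borel_open)
  then have "integral (M ` A) G = \<bar>det (matrix M)\<bar> *\<^sub>R integral A (G \<circ> M)"
    using integral_change_of_variables_linear[OF \<open>linear M\<close>] by blast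
  moreover have "G integrable_on M ` A" "(G \<circ> M) integrable_on A"
    using G_bound MA \<open>open A\<close> \<open>bounded A\<close>
    by (auto intro!: integrable_on_bounded_measurable[of _ _ C] simp: borel_open)
  then have "integral (M ` A) g = integral (M ` A) G $ 1" "integral A (\<lambda>x. g (M x)) = integral A (G \<circ> M) $ 1"
    using integral_component_eq_cart[of G "M ` A" 1] integral_component_eq_cart[of "G \<circ> M" A 1]
    by (simp_all add: G_def o_def)
  ultimately show ?thesis
    by simp
qed

text \<open>
  The library's change of variables theorem needs a well-ordered index type; \<open>'n wo_index\<close> is a copy of
  a finite index type with the order pulled back from an injection into \<open>nat\<close>, and \<open>to_wo\<close>/\<open>from_wo\<close>
  transport Lebesgue measure between the two coordinate systems.
\<close>

typedef 'a wo_index = "UNIV :: 'a set"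
  morphisms index_of Wo_index by auto

lemma index_of_Wo_index [simp]: "index_of (Wo_index x) = x"
  by (simp add: Wo_index_inverse)

lemma Wo_index_index_of [simp]: "Wo_index (index_of x) = x"
  by (simp add: index_of_inverse)

definition index_code :: "'a::finite \<Rightarrow> nat" where
  "index_code = (SOME f. inj f)"

lemma inj_index_code: "inj (index_code :: 'a::finite \<Rightarrow> nat)"
proof -
  obtain f :: "'a \<Rightarrow> nat" and n where "inj_on f UNIV"
    using finite_imp_inj_to_nat_seg[of "UNIV::'a set"] by auto
  then show ?thesis unfolding index_code_def by (metis someI_ex)
qed

instantiation wo_index :: (finite) linorder
begin

definition "x \<le> y \<longleftrightarrow> index_code (index_of x) \<le> index_code (index_of y)"

definition "x < y \<longleftrightarrow> index_code (index_of x) < index_code (index_of y)"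

instance
proof
  fix x y :: "'a wo_index"
  show "x \<le> y \<Longrightarrow> y \<le> x \<Longrightarrow> x = y"
    unfolding less_eq_wo_index_def by (metis antisym injD inj_index_code index_of_inject)
qed (auto simp: less_eq_wo_index_def less_wo_index_def)

end

instance wo_index :: (finite) wellorder
proof
  fix P :: "'a wo_index \<Rightarrow> bool" and a
  assume step: "\<And>x. (\<And>y. y < x \<Longrightarrow> P y) \<Longrightarrow> P x"
  show "P a"
    by (induct a rule: measure_induct_rule[of "\<lambda>x. index_code (index_of x)"])
       (auto intro: step simp: less_wo_index_def)
qed

instance wo_index :: (finite) finite
proof
  have "UNIV = range (Wo_index :: 'a \<Rightarrow> 'a wo_index)"
    by (metis Wo_index_cases surj_def)
  then show "finite (UNIV :: 'a wo_index set)" by (metis finite finite_imageI)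
qed

definition to_wo :: "real^'n \<Rightarrow> real^'n wo_index" where
  "to_wo v = (\<chi> i. v $ index_of i)"

definition from_wo :: "real^'n wo_index \<Rightarrow> real^'n" where
  "from_wo w = (\<chi> j. w $ Wo_index j)"

lemma to_wo_from_wo [simp]: "to_wo (from_wo w) = w"
  by (simp add: to_wo_def from_wo_def vec_eq_iff)

lemma from_wo_to_wo [simp]: "from_wo (to_wo v) = v"
  by (simp add: to_wo_def from_wo_def vec_eq_iff)

lemma linear_to_wo: "linear to_wo"
  by (auto simp: linear_iff to_wo_def vec_eq_iff)

lemma linear_from_wo: "linear from_wo"
  by (auto simp: linear_iff from_wo_def vec_eq_iff)

lemma to_wo_measurable [measurable]: "to_wo \<in> borel_measurable borel"
  using linear_to_wo by (intro borel_measurable_continuous_onI linear_continuous_on)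
    (simp add: linear_conv_bounded_linear)

lemma from_wo_measurable [measurable]: "from_wo \<in> borel_measurable borel"
  using linear_from_wo by (intro borel_measurable_continuous_onI linear_continuous_on)
    (simp add: linear_conv_bounded_linear)

lemma prod_Basis_vec: "(\<Prod>b\<in>Basis. x \<bullet> b) = (\<Prod>i\<in>UNIV. (x::real^'n) $ i)"
  by (simp add: Basis_vec_def cart_eq_inner_axis axis_eq_axis prod.UNION_disjoint)

lemma lborel_eq_distr_to_wo: "lborel = distr lborel borel (to_wo :: real^'n \<Rightarrow> _)"
proof (rule lborel_eqI)
  fix l u :: "real^'n wo_index"
  assume le: "\<And>b. b \<in> Basis \<Longrightarrow> l \<bullet> b \<le> u \<bullet> b"
  have le': "\<And>b. b \<in> Basis \<Longrightarrow> from_wo l \<bullet> b \<le> from_wo u \<bullet> b"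
  proof -
    have li: "l $ i \<le> u $ i" for i using le[of "axis i 1"] by (auto simp: Basis_vec_def inner_axis)
    fix b :: "real^'n" assume "b \<in> Basis"
    then obtain j where "b = axis j 1" by (auto simp: Basis_vec_def)
    then show "from_wo l \<bullet> b \<le> from_wo u \<bullet> b" using li by (simp add: inner_axis from_wo_def)
  qed
  have box: "to_wo -` box l u = box (from_wo l) (from_wo u)"
  proof (rule set_eqI)
    fix v :: "real^'n"
    have "(\<forall>i. l $ i < v $ index_of i \<and> v $ index_of i < u $ i)
        \<longleftrightarrow> (\<forall>j. l $ Wo_index j < v $ j \<and> v $ j < u $ Wo_index j)"
      by (metis index_of_Wo_index Wo_index_index_of)
    then show "v \<in> to_wo -` box l u \<longleftrightarrow> v \<in> box (from_wo l) (from_wo u)"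
      by (simp add: mem_box_cart to_wo_def from_wo_def)
  qed
  have "emeasure (distr lborel borel to_wo) (box l u) = emeasure lborel (to_wo -` box l u)"
    by (subst emeasure_distr) auto
  also have "\<dots> = (\<Prod>b\<in>Basis. (from_wo u - from_wo l) \<bullet> b)"
    unfolding box using le' by simp
  also have "(\<Prod>b\<in>Basis. (from_wo u - from_wo l) \<bullet> b) = (\<Prod>b\<in>Basis. (u - l) \<bullet> b)"
    unfolding prod_Basis_vec
    by (rule prod.reindex_bij_witness[where i=index_of and j=Wo_index])
       (auto simp: from_wo_def)
  finally show "emeasure (distr lborel borel to_wo) (box l u) = (\<Prod>b\<in>Basis. (u - l) \<bullet> b)" .
qed simp

lemma lborel_eq_distr_from_wo: "lborel = distr lborel borel (from_wo :: _ \<Rightarrow> real^'n)"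
proof -
  have "distr lborel borel (from_wo :: _ \<Rightarrow> real^'n) = distr (distr lborel borel to_wo) borel from_wo"
    using lborel_eq_distr_to_wo by metis
  also have "\<dots> = lborel"
    by (subst distr_distr) (auto simp: comp_def distr_id2)
  finally show ?thesis by simp
qed

text \<open>
  This is \<open>\<bar>det L\<bar>\<close> read in well-ordered coordinates; only its values on orthogonal maps and
  on inverse pairs are used below, so the identification with \<open>det\<close> itself is never needed.
\<close>

definition linear_image_factor :: "(real^'n \<Rightarrow> real^'n) \<Rightarrow> real" where
  "linear_image_factor L = \<bar>det (matrix (\<lambda>w. to_wo (L (from_wo w))))\<bar>"

lemma linear_image_factor_nonneg: "0 \<le> linear_image_factor L"
  by (simp add: linear_image_factor_def)

lemma integral_linear_image:
  fixes L :: "real^'n \<Rightarrow> real^'n" and f :: "real^'n \<Rightarrow> real"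
  assumes "linear L" "surj L" and "open S" "bounded S"
    and [measurable]: "f \<in> borel_measurable borel"
    and bound: "\<And>x. x \<in> L ` S \<Longrightarrow> norm (f x) \<le> C"
  shows "integral (L ` S) f = linear_image_factor L * integral S (\<lambda>x. f (L x))"
proof -
  define L' where "L' = (\<lambda>w. to_wo (L (from_wo w)))"
  have "linear L'"
    unfolding L'_def using linear_compose[OF linear_compose[OF linear_from_wo \<open>linear L\<close>] linear_to_wo]
    by (simp add: comp_def)
  moreover have "surj L'"
    using \<open>surj L\<close> by (intro surjI[of L' "\<lambda>y. to_wo (inv L (from_wo y))"]) (simp add: L'_def surj_f_inv_f)
  moreover have "surj to_wo"
    by (intro surjI[of to_wo from_wo]) simp
  moreover have LS: "open (L ` S)" "bounded (L ` S)"
    using open_bounded_linear_image assms by blast+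
  moreover have "L ` S = from_wo ` L' ` to_wo ` S"
    by (simp add: image_image L'_def)
  moreover have [measurable]: "L \<in> borel_measurable borel"
    using \<open>linear L\<close> by (intro borel_measurable_continuous_onI linear_continuous_on) (simp add: linear_conv_bounded_linear)
  ultimately have "integral (L ` S) f = integral (L' ` to_wo ` S) (\<lambda>y. f (from_wo y))"
    using integral_transfer_lborel[OF lborel_eq_distr_from_wo from_wo_measurable to_wo_from_wo from_wo_to_wo, of f "L ` S" C]
      bound by (auto simp: borel_open image_image)
  also have "\<dots> = linear_image_factor L * integral (to_wo ` S) (\<lambda>w. f (L (from_wo w)))"
    using \<open>linear L'\<close> \<open>surj L'\<close> open_bounded_linear_image[OF linear_to_wo \<open>surj to_wo\<close> \<open>open S\<close> \<open>bounded S\<close>] bound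
    by (subst integral_linear_image_wellorder[where C=C]) (auto simp: linear_image_factor_def L'_def)
  also have "integral (to_wo ` S) (\<lambda>w. f (L (from_wo w))) = integral S (\<lambda>x. f (L x))"
  proof -
    have "norm (f (L (from_wo w))) \<le> C" if "w \<in> to_wo ` S" for w
      using that bound by auto
    then show ?thesis
      using integral_transfer_lborel[OF lborel_eq_distr_to_wo to_wo_measurable from_wo_to_wo to_wo_from_wo,
          of "\<lambda>w. f (L (from_wo w))" "to_wo ` S" C]
        open_bounded_linear_image[OF linear_to_wo \<open>surj to_wo\<close> \<open>open S\<close> \<open>bounded S\<close>]
      by (simp add: image_image borel_open)
  qed
  finally show ?thesis .
qed

lemma measure_linear_image_factor:
  fixes L :: "real^'n \<Rightarrow> real^'n"
  assumes "linear L" "surj L" and "open S" "bounded S"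
  shows "measure lebesgue (L ` S) = linear_image_factor L * measure lebesgue S"
proof -
  have "L ` S \<in> lmeasurable" "S \<in> lmeasurable"
    using open_bounded_linear_image[OF assms] assms by (auto intro: bounded_set_imp_lmeasurable)
  then show ?thesis
    using integral_linear_image[OF assms, of "\<lambda>_. 1" 1] by (simp add: lmeasure_integral)
qed

lemma surj_matrix_vector_mult:
  fixes M M' :: "real^'n^'n"
  assumes "M ** M' = mat 1"
  shows "surj (\<lambda>x. M *v x)"
  by (intro surjI[of _ "\<lambda>y. M' *v y"]) (simp add: matrix_vector_mul_assoc assms)

lemma matrix_inv_invertible:
  assumes "invertible T"
  shows "T ** matrix_inv T = mat 1" "matrix_inv T ** T = mat 1"
  using assms someI_ex[of "\<lambda>T'. T ** T' = mat 1 \<and> T' ** T = mat 1"]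
  unfolding invertible_def matrix_inv_def by auto

lemma linear_image_factor_matrix_inv:
  fixes T :: "real^'n^'n"
  assumes "invertible T"
  shows "linear_image_factor (\<lambda>x. T *v x) * linear_image_factor (\<lambda>x. matrix_inv T *v x) = 1"
proof -
  let ?B = "ball (0::real^'n) 1" and ?L = "\<lambda>x. T *v x" and ?L' = "\<lambda>x. matrix_inv T *v x"
  have lin: "linear ?L" "linear ?L'" "surj ?L" "surj ?L'"
    using surj_matrix_vector_mult matrix_inv_invertible[OF assms] by auto
  have "open (?L' ` ?B)" "bounded (?L' ` ?B)"
    using open_bounded_linear_image[OF lin(2,4) open_ball bounded_ball] by auto
  then have "measure lebesgue (?L ` ?L' ` ?B) = linear_image_factor ?L * measure lebesgue (?L' ` ?B)"
    using lin by (intro measure_linear_image_factor) auto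
  also have "\<dots> = linear_image_factor ?L * linear_image_factor ?L' * measure lebesgue ?B"
    using lin by (simp add: measure_linear_image_factor)
  moreover have "?L ` ?L' ` ?B = ?B"
    by (simp add: image_image matrix_vector_mul_assoc matrix_inv_invertible[OF assms])
  ultimately show ?thesis
    using content_ball_pos[of 1 "0::real^'n"] by (simp add: measure_completion)
qed

lemma I_moment_matrix_image:
  fixes \<Omega> :: "(real^'n) set" and T :: "real^'n^'n"
  assumes "surj (\<lambda>x. T *v x)" "open \<Omega>" "bounded \<Omega>"
  shows "I_moment k ((\<lambda>x. T *v x) ` \<Omega>) = linear_image_factor (\<lambda>x. T *v x) * integral \<Omega> (\<lambda>x. norm (T *v x) ^ k)"
proof -
  have "bounded ((\<lambda>x. T *v x) ` \<Omega>)"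
    using assms by (intro bounded_linear_image matrix_vector_mul_bounded_linear)
  moreover have "continuous_on UNIV (\<lambda>x::real^'n. norm x ^ k)"
    by (intro continuous_intros)
  ultimately obtain C where "\<And>x. x \<in> (\<lambda>x. T *v x) ` \<Omega> \<Longrightarrow> norm (norm x ^ k) \<le> C"
    using bounded_continuous_image_bound by metis
  then show ?thesis
    unfolding I_moment_def using assms
    by (intro integral_linear_image) (auto intro: borel_measurable_continuous_onI continuous_intros)
qed

section \<open>The normalised measure on the sphere\<close>

lemma radial_projection_in_cball: "x /\<^sub>R norm x \<in> cball 0 1"
  by (cases "x = 0") auto

lemma continuous_radial_projection_bound:
  fixes g :: "real^'n \<Rightarrow> 'a::real_normed_vector"
  assumes "continuous_on UNIV g"
  obtains C where "\<And>x. norm (g (x /\<^sub>R norm x)) \<le> C"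
  using bounded_continuous_image_bound[OF assms bounded_cball] radial_projection_in_cball by metis

lemma prob_space_sphere_measure: "prob_space (sphere_measure :: (real^'n) measure)"
proof -
  have "prob_space (uniform_measure lborel (ball (0::real^'n) 1))"
    by (rule prob_space_uniform_measure)
       (use emeasure_lborel_ball_finite[of "0::real^'n" 1] content_ball_pos[of 1 "0::real^'n"]
        in \<open>auto simp: emeasure_eq_measure2 measure_def\<close>)
  then show ?thesis
    unfolding sphere_measure_def by (intro prob_space.prob_space_distr) auto
qed

lemma sets_sphere_measure [measurable_cong, simp]: "sets sphere_measure = sets borel"
  by (simp add: sphere_measure_def)

lemma measurable_sphere_measure [simp]: "measurable sphere_measure M = measurable borel M"
  by (intro measurable_cong_sets) simp_all

interpretation sphere: prob_space "sphere_measure :: (real^'n) measure"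
  by (rule prob_space_sphere_measure)

text \<open>
  The radial projection sends the centre of the ball to \<open>0 /\<^sub>R 0 = 0\<close>, so \<open>norm \<theta> = 1\<close> fails on a
  null set; the bound below is all that is needed.
\<close>

lemma AE_sphere_norm_le_1: "AE \<theta> in (sphere_measure :: (real^'n) measure). norm \<theta> \<le> 1"
proof -
  have "{x \<in> space borel. norm (x::real^'n) \<le> 1} \<in> sets borel"
    by measurable
  then show ?thesis
    unfolding sphere_measure_def using radial_projection_in_cball
    by (subst AE_distr_iff) (auto intro: AE_I2)
qed

lemma integrable_sphere_measure:
  fixes g :: "real^'n \<Rightarrow> real"
  assumes "continuous_on UNIV g"
  shows "integrable sphere_measure g"
proof -
  obtain C where C: "\<And>x. x \<in> cball 0 1 \<Longrightarrow> norm (g x) \<le> C"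
    using bounded_continuous_image_bound[OF assms bounded_cball] by metis
  show ?thesis
    by (rule sphere.integrable_const_bound[where B=C])
       (use AE_sphere_norm_le_1 C assms in \<open>auto elim!: AE_mp intro: borel_measurable_continuous_onI\<close>)
qed

lemma sphere_integral_eq_ball_average:
  fixes g :: "real^'n \<Rightarrow> real"
  assumes "continuous_on UNIV g"
  shows "(\<integral>\<theta>. g \<theta> \<partial>sphere_measure)
     = integral (ball 0 1) (\<lambda>x. g (x /\<^sub>R norm x)) / measure lborel (ball (0::real^'n) 1)"
proof -
  let ?B = "ball (0::real^'n) 1"
  let ?m = "measure lborel ?B"
  have [measurable]: "g \<in> borel_measurable borel"
    using assms by (simp add: borel_measurable_continuous_onI)
  have m: "0 < ?m"
    using content_ball_pos[of 1 "0::real^'n"] by simp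
  obtain C where "\<And>x. norm (g (x /\<^sub>R norm x)) \<le> C"
    using continuous_radial_projection_bound[OF assms] by blast
  then have int: "set_integrable lborel ?B (\<lambda>x. g (x /\<^sub>R norm x))"
    by (intro set_integrable_bounded_measurable[where C=C]) auto
  have "uniform_measure lborel ?B = density lborel (\<lambda>x. ennreal (indicator ?B x / ?m))"
  proof -
    have "indicator ?B x / ennreal ?m = ennreal (indicator ?B x / ?m)" for x
      using divide_ennreal[of 1 ?m] m by (cases "x \<in> ?B") auto
    then show ?thesis
      using emeasure_lborel_ball_finite[of "0::real^'n" 1]
      by (simp add: uniform_measure_def emeasure_eq_ennreal_measure)
  qed
  then have "(\<integral>\<theta>. g \<theta> \<partial>sphere_measure)
      = (\<integral>x. g (x /\<^sub>R norm x) \<partial>density lborel (\<lambda>x. ennreal (indicator ?B x / ?m)))"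
    unfolding sphere_measure_def by (simp add: integral_distr)
  also have "\<dots> = (\<integral>x. indicator ?B x / ?m * g (x /\<^sub>R norm x) \<partial>lborel)"
    by (subst integral_density) (auto simp: m intro!: borel_measurable_divide borel_measurable_indicator)
  also have "\<dots> = (LINT x:?B|lborel. g (x /\<^sub>R norm x)) / ?m"
    by (simp add: set_lebesgue_integral_def)
  also have "\<dots> = integral ?B (\<lambda>x. g (x /\<^sub>R norm x)) / ?m"
    using set_borel_integral_eq_integral(2)[OF int] by simp
  finally show ?thesis .
qed

lemma linear_image_factor_orthogonal:
  fixes L :: "real^'n \<Rightarrow> real^'n"
  assumes "orthogonal_transformation L"
  shows "linear_image_factor L = 1"
proof -
  have "measure lebesgue (ball (0::real^'n) 1) = linear_image_factor L * measure lebesgue (ball (0::real^'n) 1)"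
    using measure_linear_image_factor[of L "ball 0 1"] image_orthogonal_transformation_ball[OF assms]
      orthogonal_transformation_linear[OF assms] orthogonal_transformation_surj[OF assms]
    by (simp add: linear_0)
  moreover have "0 < measure lebesgue (ball (0::real^'n) 1)"
    using content_ball_pos[of 1 "0::real^'n"] by (simp add: measure_completion)
  ultimately show ?thesis by simp
qed

lemma sphere_integral_orthogonal_transformation:
  fixes g :: "real^'n \<Rightarrow> real" and L :: "real^'n \<Rightarrow> real^'n"
  assumes L: "orthogonal_transformation L" and g: "continuous_on UNIV g"
  shows "(\<integral>\<theta>. g (L \<theta>) \<partial>sphere_measure) = (\<integral>\<theta>. g \<theta> \<partial>sphere_measure)"
proof -
  have "linear L"
    using L orthogonal_transformation_linear by blast
  then have gL: "continuous_on UNIV (\<lambda>x. g (L x))"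
    by (intro continuous_on_compose2[OF g] linear_continuous_on) (auto simp: linear_conv_bounded_linear)
  have [measurable]: "g \<in> borel_measurable borel"
    using g by (simp add: borel_measurable_continuous_onI)
  obtain C where C: "\<And>x. norm (g (x /\<^sub>R norm x)) \<le> C"
    using continuous_radial_projection_bound[OF g] by blast
  have "integral (L ` ball 0 1) (\<lambda>y. g (y /\<^sub>R norm y))
      = linear_image_factor L * integral (ball 0 1) (\<lambda>x. g (L x /\<^sub>R norm (L x)))"
    by (rule integral_linear_image[where C=C])
       (use C orthogonal_transformation_surj[OF L] \<open>linear L\<close> in auto)
  moreover have "L x /\<^sub>R norm (L x) = L (x /\<^sub>R norm x)" for x
    using L by (simp add: orthogonal_transformation_norm orthogonal_transformation_scaleR)
  ultimately have "integral (ball 0 1) (\<lambda>x. g (L (x /\<^sub>R norm x))) = integral (ball 0 1) (\<lambda>y. g (y /\<^sub>R norm y))"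
    using image_orthogonal_transformation_ball[OF L, of 0 1] linear_image_factor_orthogonal[OF L] \<open>linear L\<close>
    by (simp add: linear_0)
  then show ?thesis
    using sphere_integral_eq_ball_average[OF gL] sphere_integral_eq_ball_average[OF g] by simp
qed

lemma sphere_integral_norm_power: "(\<integral>\<theta>. norm \<theta> ^ k \<partial>(sphere_measure :: (real^'n) measure)) = 1"
proof -
  have "(\<integral>\<theta>. norm \<theta> ^ k \<partial>(sphere_measure :: (real^'n) measure))
      = integral (ball (0::real^'n) 1) (\<lambda>x. norm (x /\<^sub>R norm x) ^ k) / measure lborel (ball (0::real^'n) 1)"
    by (rule sphere_integral_eq_ball_average) (auto intro!: continuous_intros)
  also have "integral (ball (0::real^'n) 1) (\<lambda>x. norm (x /\<^sub>R norm x) ^ k) = integral (ball (0::real^'n) 1) (\<lambda>_. 1)"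
    by (rule integral_spike[of "{0}"]) auto
  also have "\<dots> = measure lborel (ball (0::real^'n) 1)"
    by (simp add: lmeasure_integral[symmetric] bounded_set_imp_lmeasurable measure_completion)
  finally show ?thesis
    using content_ball_pos[of 1 "0::real^'n"] by simp
qed

lemma sphere_integral_inner_power:
  fixes e z :: "real^'n"
  assumes "norm e = 1"
  shows "(\<integral>\<theta>. (z \<bullet> \<theta>) ^ k \<partial>sphere_measure) = norm z ^ k * (\<integral>\<theta>. (e \<bullet> \<theta>) ^ k \<partial>sphere_measure)"
proof (cases "z = 0")
  case True
  then show ?thesis by (cases k) simp_all
next
  case False
  define u where "u = z /\<^sub>R norm z"
  have "norm u = norm e"
    using False assms by (simp add: u_def)
  then obtain L where L: "orthogonal_transformation L" "L u = e"
    using orthogonal_transformation_exists by metis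
  have "z \<bullet> \<theta> = norm z * (e \<bullet> L \<theta>)" for \<theta>
  proof -
    have "z \<bullet> \<theta> = norm z * (u \<bullet> \<theta>)"
      using False by (simp add: u_def)
    also have "u \<bullet> \<theta> = L u \<bullet> L \<theta>"
      using L(1) by (simp add: orthogonal_transformation_def)
    finally show ?thesis using L(2) by simp
  qed
  then have "(\<integral>\<theta>. (z \<bullet> \<theta>) ^ k \<partial>sphere_measure) = norm z ^ k * (\<integral>\<theta>. (e \<bullet> L \<theta>) ^ k \<partial>sphere_measure)"
    by (simp add: power_mult_distrib)
  also have "(\<integral>\<theta>. (e \<bullet> L \<theta>) ^ k \<partial>sphere_measure) = (\<integral>\<theta>. (e \<bullet> \<theta>) ^ k \<partial>sphere_measure)"
    by (rule sphere_integral_orthogonal_transformation[OF L(1), of "\<lambda>\<theta>. (e \<bullet> \<theta>) ^ k"])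
       (auto intro!: continuous_intros)
  finally show ?thesis .
qed

lemma sphere_integral_inner_square:
  fixes e :: "real^'n"
  assumes "norm e = 1"
  shows "(\<integral>\<theta>. (e \<bullet> \<theta>) ^ 2 \<partial>sphere_measure) = 1 / real CARD('n)"
proof -
  have coord: "(\<integral>\<theta>. (\<theta> $ j) ^ 2 \<partial>sphere_measure) = (\<integral>\<theta>. (e \<bullet> \<theta>) ^ 2 \<partial>sphere_measure)" for j :: 'n
    using sphere_integral_inner_power[OF assms, of "axis j 1" 2] by (simp add: inner_axis')
  have "real CARD('n) * (\<integral>\<theta>. (e \<bullet> \<theta>) ^ 2 \<partial>sphere_measure)
      = (\<Sum>j\<in>UNIV. \<integral>\<theta>. (\<theta> $ j) ^ 2 \<partial>(sphere_measure :: (real^'n) measure))"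
    by (simp add: coord)
  also have "\<dots> = (\<integral>\<theta>. norm \<theta> ^ 2 \<partial>(sphere_measure :: (real^'n) measure))"
    by (subst Bochner_Integration.integral_sum[symmetric])
       (auto intro!: integrable_sphere_measure continuous_intros simp: norm_vec_def L2_set_def sum_nonneg)
  also have "\<dots> = 1"
    by (rule sphere_integral_norm_power)
  finally show ?thesis by (simp add: field_simps)
qed

lemma convex_on_power_nonneg: "convex_on {0..} (\<lambda>x::real. x ^ n)"
  by (cases "even n") (auto intro: convex_power_odd convex_on_subset[OF convex_power_even])

lemma power_ge_tangent:
  fixes x a :: real
  assumes "0 \<le> x" "0 < a"
  shows "a ^ n + real n * a ^ (n - 1) * (x - a) \<le> x ^ n"
proof -
  have "real n * a ^ (n - 1) * (x - a) \<le> x ^ n - a ^ n"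
    by (rule convex_on_imp_above_tangent[OF convex_on_power_nonneg])
       (use assms in \<open>auto intro!: derivative_eq_intros simp: interior_real_atLeast\<close>)
  then show ?thesis by simp
qed

lemma sphere_integral_power_ge:
  fixes g :: "real^'n \<Rightarrow> real"
  assumes g: "continuous_on UNIV g" and nonneg: "\<And>x. 0 \<le> g x"
  shows "(\<integral>\<theta>. g \<theta> \<partial>sphere_measure) ^ n \<le> (\<integral>\<theta>. g \<theta> ^ n \<partial>sphere_measure)"
proof -
  define a where "a = (\<integral>\<theta>. g \<theta> \<partial>(sphere_measure :: (real^'n) measure))"
  have int: "integrable sphere_measure g" "integrable sphere_measure (\<lambda>\<theta>. g \<theta> ^ n)"
    using g by (auto intro!: integrable_sphere_measure continuous_intros)
  have "0 \<le> a"
    unfolding a_def using nonneg by (simp add: Bochner_Integration.integral_nonneg)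
  then consider "n = 0" | "n > 0" "a = 0" | "0 < a"
    by fastforce
  then show ?thesis
  proof cases
    case 2
    then show ?thesis
      using nonneg by (simp add: a_def[symmetric] power_0_left Bochner_Integration.integral_nonneg)
  next
    case 3
    \<comment> \<open>Jensen's inequality, by integrating the tangent line of \<open>x ^ n\<close> at the mean\<close>
    have "(\<integral>\<theta>. a ^ n + real n * a ^ (n - 1) * (g \<theta> - a) \<partial>sphere_measure) \<le> (\<integral>\<theta>. g \<theta> ^ n \<partial>sphere_measure)"
      using int power_ge_tangent[OF nonneg 3] by (intro integral_mono) auto
    moreover have "(\<integral>\<theta>. a ^ n + real n * a ^ (n - 1) * (g \<theta> - a) \<partial>sphere_measure) = a ^ n"
      using int by (simp add: a_def[symmetric] sphere.prob_space)
    ultimately show ?thesis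
      by (simp add: a_def)
  qed (simp add: sphere.prob_space)
qed

lemma sphere_integral_inner_even_power_pos:
  fixes e :: "real^'n"
  assumes "norm e = 1"
  shows "0 < (\<integral>\<theta>. (e \<bullet> \<theta>) ^ (2 * p) \<partial>sphere_measure)"
proof -
  have "0 < (1 / real CARD('n)) ^ p"
    by simp
  also have "\<dots> = (\<integral>\<theta>. (e \<bullet> \<theta>) ^ 2 \<partial>sphere_measure) ^ p"
    by (simp add: sphere_integral_inner_square[OF assms])
  also have "\<dots> \<le> (\<integral>\<theta>. ((e \<bullet> \<theta>) ^ 2) ^ p \<partial>sphere_measure)"
    by (rule sphere_integral_power_ge) (auto intro!: continuous_intros)
  finally show ?thesis
    by (simp add: power_mult)
qed

section \<open>Powers of inner products\<close>

definition multi_indices :: "nat \<Rightarrow> ('n::finite \<Rightarrow> nat) set" where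
  "multi_indices k = {\<alpha>. sum \<alpha> UNIV = k}"

definition monomial :: "('n::finite \<Rightarrow> nat) \<Rightarrow> real^'n \<Rightarrow> real" where
  "monomial \<alpha> x = (\<Prod>i\<in>UNIV. (x $ i) ^ \<alpha> i)"

lemma finite_multi_indices: "finite (multi_indices k :: ('n::finite \<Rightarrow> nat) set)"
proof (rule finite_subset)
  show "multi_indices k \<subseteq> PiE (UNIV::'n set) (\<lambda>_. {..k})"
    by (auto simp: multi_indices_def PiE_UNIV_domain intro: member_le_sum)
qed (intro finite_PiE; simp)

lemma continuous_on_monomial: "continuous_on UNIV (monomial \<alpha>)"
  unfolding monomial_def by (intro continuous_intros)

lemma sum_fun_upd_add: "sum (\<alpha>(j := v)) (UNIV::'n::finite set) + \<alpha> j = sum \<alpha> UNIV + (v::nat)"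
  by (simp add: sum.remove[of UNIV j] sum.cong[of "UNIV - {j}" _ "\<alpha>(j := v)" \<alpha>])

lemma prod_power_fun_upd_Suc:
  "(\<Prod>i\<in>UNIV. z i ^ (\<alpha>(j := Suc (\<alpha> j))) i) = z j * (\<Prod>i\<in>(UNIV::'n::finite set). (z i :: real) ^ \<alpha> i)"
  by (simp add: prod.remove[of UNIV j] prod.cong[of "UNIV - {j}" _ "\<lambda>i. z i ^ (\<alpha>(j := Suc (\<alpha> j))) i"])

lemma sum_multi_indices_shift:
  fixes z :: "'n::finite \<Rightarrow> real"
  shows "(\<Sum>\<alpha>\<in>multi_indices k. m \<alpha> * (\<Prod>i\<in>UNIV. z i ^ (\<alpha>(j := Suc (\<alpha> j))) i))
       = (\<Sum>\<beta>\<in>multi_indices (Suc k). (if 0 < \<beta> j then m (\<beta>(j := \<beta> j - 1)) else 0) * (\<Prod>i\<in>UNIV. z i ^ \<beta> i))"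
proof -
  have "(\<Sum>\<beta>\<in>multi_indices (Suc k). (if 0 < \<beta> j then m (\<beta>(j := \<beta> j - 1)) else 0) * (\<Prod>i\<in>UNIV. z i ^ \<beta> i))
      = (\<Sum>\<beta>\<in>{\<beta>\<in>multi_indices (Suc k). 0 < \<beta> j}. m (\<beta>(j := \<beta> j - 1)) * (\<Prod>i\<in>UNIV. z i ^ \<beta> i))"
    by (subst sum.inter_filter) (auto simp: finite_multi_indices intro!: sum.cong)
  also have "\<dots> = (\<Sum>\<alpha>\<in>multi_indices k. m \<alpha> * (\<Prod>i\<in>UNIV. z i ^ (\<alpha>(j := Suc (\<alpha> j))) i))"
  proof (rule sum.reindex_bij_witness[where i="\<lambda>\<alpha>. \<alpha>(j := Suc (\<alpha> j))" and j="\<lambda>\<beta>. \<beta>(j := \<beta> j - 1)"])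
    fix \<beta> :: "'n \<Rightarrow> nat"
    assume "\<beta> \<in> {\<beta> \<in> multi_indices (Suc k). 0 < \<beta> j}"
    then have "0 < \<beta> j" "sum \<beta> UNIV = Suc k"
      by (auto simp: multi_indices_def)
    then show "\<beta>(j := \<beta> j - 1) \<in> multi_indices k"
      and "(\<beta>(j := \<beta> j - 1))(j := Suc ((\<beta>(j := \<beta> j - 1)) j)) = \<beta>"
      using sum_fun_upd_add[of \<beta> j "\<beta> j - 1"] by (auto simp: multi_indices_def)
    then show "m (\<beta>(j := \<beta> j - 1)) * (\<Prod>i\<in>UNIV. z i ^ (\<beta>(j := \<beta> j - 1, j := Suc ((\<beta>(j := \<beta> j - 1)) j))) i)
        = m (\<beta>(j := \<beta> j - 1)) * (\<Prod>i\<in>UNIV. z i ^ \<beta> i)"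
      by simp
  next
    fix \<alpha> :: "'n \<Rightarrow> nat"
    assume "\<alpha> \<in> multi_indices k"
    then show "\<alpha>(j := Suc (\<alpha> j)) \<in> {\<beta> \<in> multi_indices (Suc k). 0 < \<beta> j}"
      using sum_fun_upd_add[of \<alpha> j "Suc (\<alpha> j)"] by (auto simp: multi_indices_def)
  qed auto
  finally show ?thesis ..
qed

lemma multinomial_expansion:
  "\<exists>m. \<forall>z::'n::finite \<Rightarrow> real.
     (\<Sum>i\<in>UNIV. z i) ^ k = (\<Sum>\<alpha>\<in>multi_indices k. m \<alpha> * (\<Prod>i\<in>UNIV. z i ^ \<alpha> i))"
proof (induction k)
  case 0
  have "multi_indices 0 = {\<lambda>_::'n. 0}"
    by (auto simp: multi_indices_def)
  then show ?case
    by (intro exI[of _ "\<lambda>_. 1"]) simp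
next
  case (Suc k)
  then obtain m where m: "\<And>z::'n \<Rightarrow> real.
      (\<Sum>i\<in>UNIV. z i) ^ k = (\<Sum>\<alpha>\<in>multi_indices k. m \<alpha> * (\<Prod>i\<in>UNIV. z i ^ \<alpha> i))"
    by blast
  define m' where "m' \<beta> = (\<Sum>j\<in>UNIV. if 0 < \<beta> j then m (\<beta>(j := \<beta> j - 1)) else 0)" for \<beta>
  have "(\<Sum>i\<in>UNIV. z i) ^ Suc k = (\<Sum>\<beta>\<in>multi_indices (Suc k). m' \<beta> * (\<Prod>i\<in>UNIV. z i ^ \<beta> i))"
    for z :: "'n \<Rightarrow> real"
  proof -
    have "(\<Sum>i\<in>UNIV. z i) ^ Suc k
        = (\<Sum>j\<in>UNIV. \<Sum>\<alpha>\<in>multi_indices k. m \<alpha> * (z j * (\<Prod>i\<in>UNIV. z i ^ \<alpha> i)))"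
      by (subst sum.swap) (simp add: m sum_distrib_left sum_distrib_right mult_ac)
    also have "\<dots> = (\<Sum>j\<in>UNIV. \<Sum>\<beta>\<in>multi_indices (Suc k).
        (if 0 < \<beta> j then m (\<beta>(j := \<beta> j - 1)) else 0) * (\<Prod>i\<in>UNIV. z i ^ \<beta> i))"
      by (simp only: prod_power_fun_upd_Suc[symmetric] sum_multi_indices_shift)
    also have "\<dots> = (\<Sum>\<beta>\<in>multi_indices (Suc k). m' \<beta> * (\<Prod>i\<in>UNIV. z i ^ \<beta> i))"
      by (subst sum.swap) (simp add: m'_def sum_distrib_right)
    finally show ?thesis .
  qed
  then show ?case by blast
qed

lemma inner_power_expansion:
  obtains m where "\<And>x y :: real^'n. (x \<bullet> y) ^ k = (\<Sum>\<alpha>\<in>multi_indices k. m \<alpha> * (monomial \<alpha> x * monomial \<alpha> y))"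
proof -
  obtain m where m: "\<And>z::'n \<Rightarrow> real.
      (\<Sum>i\<in>UNIV. z i) ^ k = (\<Sum>\<alpha>\<in>multi_indices k. m \<alpha> * (\<Prod>i\<in>UNIV. z i ^ \<alpha> i))"
    using multinomial_expansion by blast
  have "(x \<bullet> y) ^ k = (\<Sum>\<alpha>\<in>multi_indices k. m \<alpha> * (monomial \<alpha> x * monomial \<alpha> y))" for x y :: "real^'n"
    using m[of "\<lambda>i. x $ i * y $ i"] by (simp add: inner_vec_def monomial_def power_mult_distrib prod.distrib)
  then show ?thesis using that by blast
qed

lemma continuous_on_monomial_matrix: "continuous_on UNIV (\<lambda>x. monomial \<alpha> ((Q::real^'n^'n) *v x))"
  by (rule continuous_on_compose2[OF continuous_on_monomial linear_continuous_on])
     (auto simp: matrix_vector_mul_bounded_linear)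

lemma integrable_sphere_monomial_matrix:
  "integrable sphere_measure (\<lambda>\<eta>. c * monomial \<alpha> ((Q::real^'n^'n) *v \<eta>))"
  by (intro integrable_mult_right integrable_sphere_measure continuous_on_monomial_matrix)

context
  fixes m :: "('n::finite \<Rightarrow> nat) \<Rightarrow> real" and k :: nat
  assumes expansion: "\<And>x y :: real^'n. (x \<bullet> y) ^ k = (\<Sum>\<alpha>\<in>multi_indices k. m \<alpha> * (monomial \<alpha> x * monomial \<alpha> y))"
begin

lemma sphere_integral_inner_power_expand:
  fixes z :: "real^'n" and Q :: "real^'n^'n"
  shows "(\<integral>\<eta>. (z \<bullet> (Q *v \<eta>)) ^ k \<partial>sphere_measure)
     = (\<Sum>\<alpha>\<in>multi_indices k. m \<alpha> * monomial \<alpha> z * (\<integral>\<eta>. monomial \<alpha> (Q *v \<eta>) \<partial>sphere_measure))"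
proof -
  have "(\<integral>\<eta>. (z \<bullet> (Q *v \<eta>)) ^ k \<partial>sphere_measure)
      = (\<integral>\<eta>. (\<Sum>\<alpha>\<in>multi_indices k. m \<alpha> * monomial \<alpha> z * monomial \<alpha> (Q *v \<eta>)) \<partial>sphere_measure)"
    by (simp add: expansion mult_ac)
  also have "\<dots> = (\<Sum>\<alpha>\<in>multi_indices k. (\<integral>\<eta>. m \<alpha> * monomial \<alpha> z * monomial \<alpha> (Q *v \<eta>) \<partial>sphere_measure))"
    by (intro Bochner_Integration.integral_sum integrable_sphere_monomial_matrix)
  also have "\<dots> = (\<Sum>\<alpha>\<in>multi_indices k. m \<alpha> * monomial \<alpha> z * (\<integral>\<eta>. monomial \<alpha> (Q *v \<eta>) \<partial>sphere_measure))"
    by simp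
  finally show ?thesis .
qed

lemma integral_inner_power_expand:
  fixes y :: "real^'n"
  assumes "\<Omega> \<in> sets borel" "bounded \<Omega>"
  shows "integral \<Omega> (\<lambda>x. (x \<bullet> y) ^ k) = (\<Sum>\<alpha>\<in>multi_indices k. m \<alpha> * integral \<Omega> (monomial \<alpha>) * monomial \<alpha> y)"
proof -
  have "integral \<Omega> (\<lambda>x. (x \<bullet> y) ^ k) = integral \<Omega> (\<lambda>x. \<Sum>\<alpha>\<in>multi_indices k. (m \<alpha> * monomial \<alpha> y) *\<^sub>R monomial \<alpha> x)"
    by (simp add: expansion mult_ac)
  also have "\<dots> = (\<Sum>\<alpha>\<in>multi_indices k. integral \<Omega> (\<lambda>x. (m \<alpha> * monomial \<alpha> y) *\<^sub>R monomial \<alpha> x))"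
    by (intro Henstock_Kurzweil_Integration.integral_sum finite_multi_indices ballI integrable_cmul
        integrable_on_continuous_bounded continuous_on_monomial assms)
  also have "\<dots> = (\<Sum>\<alpha>\<in>multi_indices k. m \<alpha> * integral \<Omega> (monomial \<alpha>) * monomial \<alpha> y)"
    by (simp add: mult_ac)
  finally show ?thesis .
qed

lemma sphere_integral_sphere_integral_inner_power:
  fixes P Q :: "real^'n^'n"
  shows "(\<integral>\<theta>. (\<integral>\<eta>. ((P *v \<theta>) \<bullet> (Q *v \<eta>)) ^ k \<partial>sphere_measure) \<partial>sphere_measure)
    = (\<Sum>\<alpha>\<in>multi_indices k. m \<alpha> * (\<integral>\<theta>. monomial \<alpha> (P *v \<theta>) \<partial>sphere_measure)
                                  * (\<integral>\<eta>. monomial \<alpha> (Q *v \<eta>) \<partial>sphere_measure))"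
proof -
  let ?I = "\<lambda>\<alpha> R. (\<integral>\<eta>. monomial \<alpha> ((R::real^'n^'n) *v \<eta>) \<partial>sphere_measure)"
  have "(\<integral>\<theta>. (\<integral>\<eta>. ((P *v \<theta>) \<bullet> (Q *v \<eta>)) ^ k \<partial>sphere_measure) \<partial>sphere_measure)
      = (\<integral>\<theta>. (\<Sum>\<alpha>\<in>multi_indices k. (m \<alpha> * ?I \<alpha> Q) * monomial \<alpha> (P *v \<theta>)) \<partial>sphere_measure)"
    by (simp add: sphere_integral_inner_power_expand mult_ac)
  also have "\<dots> = (\<Sum>\<alpha>\<in>multi_indices k. (\<integral>\<theta>. (m \<alpha> * ?I \<alpha> Q) * monomial \<alpha> (P *v \<theta>) \<partial>sphere_measure))"
    by (intro Bochner_Integration.integral_sum integrable_sphere_monomial_matrix)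
  finally show ?thesis
    by (simp add: mult_ac)
qed

lemma sphere_integral_inner_power_commute:
  fixes P Q :: "real^'n^'n"
  shows "(\<integral>\<theta>. (\<integral>\<eta>. ((P *v \<theta>) \<bullet> (Q *v \<eta>)) ^ k \<partial>sphere_measure) \<partial>sphere_measure)
   = (\<integral>\<eta>. (\<integral>\<theta>. ((P *v \<theta>) \<bullet> (Q *v \<eta>)) ^ k \<partial>sphere_measure) \<partial>sphere_measure)"
  using sphere_integral_sphere_integral_inner_power[of P Q] sphere_integral_sphere_integral_inner_power[of Q P]
  by (simp add: inner_commute mult_ac)

lemma integral_sphere_integral_inner_power_commute:
  fixes Q :: "real^'n^'n"
  assumes "\<Omega> \<in> sets borel" "bounded \<Omega>"
  shows "integral \<Omega> (\<lambda>x. \<integral>\<eta>. (x \<bullet> (Q *v \<eta>)) ^ k \<partial>sphere_measure)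
       = (\<integral>\<eta>. integral \<Omega> (\<lambda>x. (x \<bullet> (Q *v \<eta>)) ^ k) \<partial>sphere_measure)"
proof -
  let ?I = "\<lambda>\<alpha>. (\<integral>\<eta>. monomial \<alpha> (Q *v \<eta>) \<partial>sphere_measure)"
  have "integral \<Omega> (\<lambda>x. \<integral>\<eta>. (x \<bullet> (Q *v \<eta>)) ^ k \<partial>sphere_measure)
      = integral \<Omega> (\<lambda>x. \<Sum>\<alpha>\<in>multi_indices k. (m \<alpha> * ?I \<alpha>) *\<^sub>R monomial \<alpha> x)"
    by (simp add: sphere_integral_inner_power_expand mult_ac)
  also have "\<dots> = (\<Sum>\<alpha>\<in>multi_indices k. integral \<Omega> (\<lambda>x. (m \<alpha> * ?I \<alpha>) *\<^sub>R monomial \<alpha> x))"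
    by (intro Henstock_Kurzweil_Integration.integral_sum finite_multi_indices ballI integrable_cmul
        integrable_on_continuous_bounded continuous_on_monomial assms)
  also have "\<dots> = (\<Sum>\<alpha>\<in>multi_indices k. (\<integral>\<eta>. (m \<alpha> * integral \<Omega> (monomial \<alpha>)) * monomial \<alpha> (Q *v \<eta>) \<partial>sphere_measure))"
    by (simp add: mult_ac)
  also have "\<dots> = (\<integral>\<eta>. (\<Sum>\<alpha>\<in>multi_indices k. (m \<alpha> * integral \<Omega> (monomial \<alpha>)) * monomial \<alpha> (Q *v \<eta>)) \<partial>sphere_measure)"
    by (intro Bochner_Integration.integral_sum[symmetric] integrable_sphere_monomial_matrix)
  also have "\<dots> = (\<integral>\<eta>. integral \<Omega> (\<lambda>x. (x \<bullet> (Q *v \<eta>)) ^ k) \<partial>sphere_measure)"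
    by (simp add: integral_inner_power_expand[OF assms] mult_ac)
  finally show ?thesis .
qed

end

section \<open>Domains admitting frames\<close>

lemma transpose_mult_inner: "(transpose T *v x) \<bullet> y = x \<bullet> (T *v (y::real^'n))"
  by (simp add: dot_lmul_matrix)

lemma F_p_transpose: "F_p p (transpose T) = F_p p (T :: real^'n^'n)"
proof -
  let ?k = "2 * p"
  obtain m where m: "\<And>x y :: real^'n. (x \<bullet> y) ^ ?k = (\<Sum>\<alpha>\<in>multi_indices ?k. m \<alpha> * (monomial \<alpha> x * monomial \<alpha> y))"
    using inner_power_expansion by blast
  define e :: "real^'n" where "e = axis undefined 1"
  have e: "norm e = 1"
    by (simp add: e_def)
  define \<kappa> where "\<kappa> = (\<integral>\<theta>. (e \<bullet> \<theta>) ^ ?k \<partial>sphere_measure)"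
  have zonal: "(\<integral>\<eta>. (z \<bullet> \<eta>) ^ ?k \<partial>sphere_measure) = \<kappa> * norm z ^ ?k" for z :: "real^'n"
    unfolding \<kappa>_def using sphere_integral_inner_power[OF e, of z ?k] by (simp only: mult.commute)
  have "\<kappa> * F_p p (transpose T)
      = (\<integral>\<theta>. (\<integral>\<eta>. ((transpose T *v \<theta>) \<bullet> \<eta>) ^ ?k \<partial>sphere_measure) \<partial>sphere_measure)"
    by (simp add: F_p_def zonal del: transpose_matrix_vector)
  also have "\<dots> = (\<integral>\<theta>. (\<integral>\<eta>. ((mat 1 *v \<theta>) \<bullet> (T *v \<eta>)) ^ ?k \<partial>sphere_measure) \<partial>sphere_measure)"
    by (simp add: transpose_mult_inner matrix_vector_mul_lid del: transpose_matrix_vector)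
  \<comment> \<open>swapping the two sphere integrals exchanges the roles of \<open>T\<close> and its transpose\<close>
  also have "\<dots> = (\<integral>\<eta>. (\<integral>\<theta>. ((T *v \<eta>) \<bullet> \<theta>) ^ ?k \<partial>sphere_measure) \<partial>sphere_measure)"
    using sphere_integral_inner_power_commute[OF m, of "mat 1" T]
    by (simp add: matrix_vector_mul_lid inner_commute[of _ "T *v _"])
  also have "\<dots> = \<kappa> * F_p p T"
    by (simp add: F_p_def zonal)
  finally show ?thesis
    using sphere_integral_inner_even_power_pos[OF e, of p] by (simp add: \<kappa>_def)
qed

lemma homogeneous_poly_integral_inner_power:
  assumes "\<Omega> \<in> sets borel" "bounded \<Omega>"
  shows "homogeneous_poly k (\<lambda>y::real^'n. integral \<Omega> (\<lambda>x. (x \<bullet> y) ^ k))"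
proof -
  obtain m where m: "\<And>x y :: real^'n. (x \<bullet> y) ^ k = (\<Sum>\<alpha>\<in>multi_indices k. m \<alpha> * (monomial \<alpha> x * monomial \<alpha> y))"
    using inner_power_expansion by blast
  show ?thesis
    unfolding homogeneous_poly_def
    by (rule exI[of _ "\<lambda>\<alpha>. m \<alpha> * integral \<Omega> (monomial \<alpha>)"])
       (simp add: integral_inner_power_expand[OF m assms] multi_indices_def monomial_def)
qed

lemma integral_inner_power_isometry_invariant:
  fixes \<Omega> :: "(real^'n) set"
  assumes U: "U \<in> isometry_group \<Omega>" and "open \<Omega>" "bounded \<Omega>"
  shows "integral \<Omega> (\<lambda>x. (x \<bullet> (U *v y)) ^ k) = integral \<Omega> (\<lambda>x. (x \<bullet> y) ^ k)"
proof -
  have "orthogonal_matrix U" and U\<Omega>: "(\<lambda>x. U *v x) ` \<Omega> = \<Omega>"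
    using U by (auto simp: isometry_group_def)
  define L where "L x = transpose U *v x" for x
  have L: "orthogonal_transformation L"
    unfolding L_def using \<open>orthogonal_matrix U\<close>
    by (simp add: orthogonal_transformation_matrix orthogonal_matrix_transpose del: transpose_matrix_vector)
  have "L ` \<Omega> = L ` (\<lambda>x. U *v x) ` \<Omega>"
    by (simp add: U\<Omega>)
  also have "\<dots> = \<Omega>"
    using \<open>orthogonal_matrix U\<close>
    by (simp add: image_image L_def matrix_vector_mul_assoc orthogonal_matrix_def del: transpose_matrix_vector)
  finally have "L ` \<Omega> = \<Omega>" .
  moreover have "continuous_on UNIV (\<lambda>z::real^'n. (z \<bullet> y) ^ k)"
    by (intro continuous_intros)
  then obtain C where "\<And>z. z \<in> L ` \<Omega> \<Longrightarrow> norm ((z \<bullet> y) ^ k) \<le> C"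
    using bounded_continuous_image_bound \<open>L ` \<Omega> = \<Omega>\<close> \<open>bounded \<Omega>\<close> by metis
  then have "integral (L ` \<Omega>) (\<lambda>z. (z \<bullet> y) ^ k) = linear_image_factor L * integral \<Omega> (\<lambda>x. (L x \<bullet> y) ^ k)"
    using assms orthogonal_transformation_linear[OF L] orthogonal_transformation_surj[OF L]
    by (intro integral_linear_image) (auto intro: borel_measurable_continuous_onI continuous_intros)
  ultimately show ?thesis
    by (simp add: linear_image_factor_orthogonal[OF L] L_def transpose_mult_inner del: transpose_matrix_vector)
qed

lemma admits_p_frames_integral_inner_power:
  fixes \<Omega> :: "(real^'n) set"
  assumes "admits_p_frames p \<Omega>" "open \<Omega>" "bounded \<Omega>"
  obtains c where "\<And>y. integral \<Omega> (\<lambda>x. (x \<bullet> y) ^ (2 * p)) = c * norm y ^ (2 * p)"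
proof -
  let ?h = "\<lambda>y. integral \<Omega> (\<lambda>x. (x \<bullet> y) ^ (2 * p))"
  have "homogeneous_poly (2 * p) ?h"
    using assms by (intro homogeneous_poly_integral_inner_power) auto
  moreover have "\<forall>U\<in>isometry_group \<Omega>. \<forall>y. ?h (U *v y) = ?h y"
    using integral_inner_power_isometry_invariant assms by blast
  ultimately show ?thesis
    using assms(1) that unfolding admits_p_frames_def by blast
qed

lemma integral_norm_power_matrix_eq:
  fixes \<Omega> :: "(real^'n) set" and T :: "real^'n^'n" and e :: "real^'n"
  assumes "\<Omega> \<in> sets borel" "bounded \<Omega>" and e: "norm e = 1"
    and frame: "\<And>y. integral \<Omega> (\<lambda>x. (x \<bullet> y) ^ (2 * p)) = c * norm y ^ (2 * p)"
  shows "(\<integral>\<theta>. (e \<bullet> \<theta>) ^ (2 * p) \<partial>sphere_measure) * integral \<Omega> (\<lambda>x. norm (T *v x) ^ (2 * p)) = c * F_p p T"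
proof -
  let ?k = "2 * p"
  obtain m where m: "\<And>x y :: real^'n. (x \<bullet> y) ^ ?k = (\<Sum>\<alpha>\<in>multi_indices ?k. m \<alpha> * (monomial \<alpha> x * monomial \<alpha> y))"
    using inner_power_expansion by blast
  define \<kappa> where "\<kappa> = (\<integral>\<theta>. (e \<bullet> \<theta>) ^ ?k \<partial>sphere_measure)"
  have zonal: "(\<integral>\<eta>. (z \<bullet> \<eta>) ^ ?k \<partial>sphere_measure) = \<kappa> * norm z ^ ?k" for z :: "real^'n"
    unfolding \<kappa>_def using sphere_integral_inner_power[OF e, of z ?k] by (simp only: mult.commute)
  have "\<kappa> * integral \<Omega> (\<lambda>x. norm (T *v x) ^ ?k) = integral \<Omega> (\<lambda>x. \<integral>\<eta>. ((T *v x) \<bullet> \<eta>) ^ ?k \<partial>sphere_measure)"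
    by (simp add: zonal)
  also have "\<dots> = integral \<Omega> (\<lambda>x. \<integral>\<eta>. (x \<bullet> (transpose T *v \<eta>)) ^ ?k \<partial>sphere_measure)"
    by (simp add: transpose_mult_inner[symmetric] inner_commute[of "T *v _"] del: transpose_matrix_vector)
  also have "\<dots> = (\<integral>\<eta>. integral \<Omega> (\<lambda>x. (x \<bullet> (transpose T *v \<eta>)) ^ ?k) \<partial>sphere_measure)"
    by (rule integral_sphere_integral_inner_power_commute[OF m assms(1,2)])
  also have "\<dots> = c * F_p p (transpose T)"
    by (simp add: frame F_p_def del: transpose_matrix_vector)
  finally show ?thesis
    by (simp add: \<kappa>_def F_p_transpose)
qed

lemma integral_norm_power_matrix:
  fixes \<Omega> :: "(real^'n) set" and T :: "real^'n^'n"
  assumes "admits_p_frames p \<Omega>" "open \<Omega>" "bounded \<Omega>"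
  shows "integral \<Omega> (\<lambda>x. norm (T *v x) ^ (2 * p)) = I_moment (2 * p) \<Omega> * F_p p T"
proof -
  obtain c where frame: "\<And>y. integral \<Omega> (\<lambda>x. (x \<bullet> y) ^ (2 * p)) = c * norm y ^ (2 * p)"
    using admits_p_frames_integral_inner_power assms by blast
  define e :: "real^'n" where "e = axis undefined 1"
  define \<kappa> where "\<kappa> = (\<integral>\<theta>. (e \<bullet> \<theta>) ^ (2 * p) \<partial>sphere_measure)"
  have e: "norm e = 1"
    by (simp add: e_def)
  have "\<kappa> * integral \<Omega> (\<lambda>x. norm (T *v x) ^ (2 * p)) = c * F_p p T"
    and "\<kappa> * I_moment (2 * p) \<Omega> = c"
    using integral_norm_power_matrix_eq[OF _ _ e frame, of T] integral_norm_power_matrix_eq[OF _ _ e frame, of "mat 1"] assms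
    by (auto simp: \<kappa>_def I_moment_def F_p_def matrix_vector_mul_lid sphere_integral_norm_power borel_open)
  then have "\<kappa> * integral \<Omega> (\<lambda>x. norm (T *v x) ^ (2 * p)) = \<kappa> * (I_moment (2 * p) \<Omega> * F_p p T)"
    by (simp add: mult.assoc)
  moreover have "0 < \<kappa>"
    unfolding \<kappa>_def by (rule sphere_integral_inner_even_power_pos[OF e])
  ultimately show ?thesis
    by simp
qed

section \<open>Orthogonal diagonalisation of symmetric matrices\<close>

lemma linear_le_quadratic_imp_zero:
  fixes a c :: real
  assumes "\<And>t. 2 * t * a \<le> t\<^sup>2 * c"
  shows "a = 0"
proof -
  define s where "s = \<bar>c\<bar> + 1"
  have s: "0 < s" "c < 2 * s"
    by (auto simp: s_def)
  have "2 * (a / s) * a \<le> (a / s)\<^sup>2 * c"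
    by (rule assms)
  then have "2 * a\<^sup>2 * s \<le> a\<^sup>2 * c"
    using s by (simp add: power2_eq_square field_simps)
  then have "a\<^sup>2 * (2 * s - c) \<le> 0"
    by (simp add: algebra_simps)
  with s have "a\<^sup>2 \<le> 0"
    by (simp add: mult_le_0_iff)
  then show ?thesis
    by simp
qed

lemma symmetric_inner_matrix: "transpose A = A \<Longrightarrow> x \<bullet> (A *v y) = (A *v x) \<bullet> (y::real^'n)"
  by (metis transpose_mult_inner inner_commute)

lemma quadratic_form_max_critical:
  fixes A :: "real^'n^'n"
  assumes sym: "transpose A = A" and W: "subspace W" "u \<in> W" "w \<in> W" and u: "norm u = 1" "u \<bullet> w = 0"
    and max: "\<And>y. y \<in> W \<Longrightarrow> norm y = 1 \<Longrightarrow> y \<bullet> (A *v y) \<le> u \<bullet> (A *v u)"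
  shows "w \<bullet> (A *v u) = 0"
proof (rule linear_le_quadratic_imp_zero)
  fix t :: real
  let ?q = "\<lambda>x. x \<bullet> (A *v x)" and ?y = "u + t *\<^sub>R w"
  have uu: "u \<bullet> u = 1"
    using u(1) by (simp add: norm_eq_1)
  have yy: "?y \<bullet> ?y = 1 + t\<^sup>2 * (w \<bullet> w)"
    using uu u(2) by (simp add: inner_add inner_commute power2_eq_square algebra_simps)
  then have "0 < ?y \<bullet> ?y"
    by (simp add: add_pos_nonneg)
  then have "?y \<noteq> 0"
    by auto
  then have "?q (?y /\<^sub>R norm ?y) \<le> ?q u"
    using W by (intro max) (auto intro: subspace_add subspace_scale)
  moreover have "?q (?y /\<^sub>R norm ?y) = ?q ?y / (?y \<bullet> ?y)"
    by (simp add: matrix_vector_mult_scaleR dot_square_norm power2_eq_square divide_inverse mult_ac)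
  ultimately have "?q ?y \<le> ?q u * (?y \<bullet> ?y)"
    using \<open>?y \<noteq> 0\<close> by (simp add: divide_le_eq)
  moreover have "u \<bullet> (A *v w) = w \<bullet> (A *v u)"
    using symmetric_inner_matrix[OF sym, of u w] by (simp add: inner_commute)
  ultimately show "2 * t * (w \<bullet> (A *v u)) \<le> t\<^sup>2 * (?q u * (w \<bullet> w) - ?q w)"
    using yy u(2)
    by (simp add: matrix_vector_right_distrib matrix_vector_mult_scaleR inner_add inner_commute
        power2_eq_square algebra_simps)
qed

lemma symmetric_eigenvector_orthogonal:
  fixes A :: "real^'n^'n" and v :: "'n \<Rightarrow> real^'n"
  assumes sym: "transpose A = A" and K: "finite K" "card K < CARD('n)"
    and ev: "\<And>i. i \<in> K \<Longrightarrow> A *v v i = lam i *\<^sub>R v i"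
  obtains u where "norm u = 1" "\<And>i. i \<in> K \<Longrightarrow> v i \<bullet> u = 0" "A *v u = (u \<bullet> (A *v u)) *\<^sub>R u"
proof -
  let ?q = "\<lambda>x. x \<bullet> (A *v x)"
  define W where "W = {x. \<forall>i\<in>K. v i \<bullet> x = 0}"
  have "subspace W"
    by (auto simp: W_def subspace_def inner_add_right)
  have "dim (v ` K) < DIM(real^'n)"
    using dim_le_card[of "v ` K" "v ` K"] card_image_le[OF K(1), of v] K by (simp add: span_base subsetI)
  then obtain x0 where x0: "x0 \<noteq> 0" "\<And>y. y \<in> span (v ` K) \<Longrightarrow> orthogonal x0 y"
    using orthogonal_to_subspace_exists by blast
  then have "v i \<bullet> x0 = 0" if "i \<in> K" for i
    using x0(2)[OF span_base[OF imageI[OF that]]] by (simp add: orthogonal_def inner_commute)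
  then have "x0 /\<^sub>R norm x0 \<in> sphere 0 1 \<inter> W"
    using x0(1) by (auto simp: W_def)
  moreover have "compact (sphere 0 1 \<inter> W)"
    using \<open>subspace W\<close> by (intro compact_Int_closed compact_sphere closed_subspace)
  moreover have "continuous_on (sphere 0 1 \<inter> W) ?q"
    by (intro continuous_intros linear_continuous_on) (auto simp: matrix_vector_mul_bounded_linear)
  ultimately obtain u where "u \<in> sphere 0 1 \<inter> W" and u_max: "\<And>y. y \<in> sphere 0 1 \<inter> W \<Longrightarrow> ?q y \<le> ?q u"
    using continuous_attains_sup[of "sphere 0 1 \<inter> W" ?q] by blast
  then have u: "norm u = 1" "u \<in> W"
    by auto
  define r where "r = A *v u - ?q u *\<^sub>R u"
  have "v i \<bullet> r = 0" if "i \<in> K" for i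
    using symmetric_inner_matrix[OF sym, of "v i" u] ev[OF that] u(2) that
    by (simp add: W_def r_def inner_diff_right)
  moreover have "u \<bullet> r = 0"
    using u(1) by (simp add: r_def inner_diff_right dot_square_norm)
  ultimately have "r \<bullet> (A *v u) = 0"
    using u u_max \<open>subspace W\<close> by (intro quadratic_form_max_critical[OF sym]) (auto simp: W_def)
  moreover have "r \<bullet> (A *v u) = r \<bullet> r"
    using \<open>u \<bullet> r = 0\<close> by (simp add: r_def inner_diff_left inner_diff_right inner_commute)
  ultimately have "A *v u = ?q u *\<^sub>R u"
    by (simp add: r_def)
  then show ?thesis
    using that u by (auto simp: W_def)
qed

lemma symmetric_orthonormal_eigenvectors:
  fixes A :: "real^'n^'n" and K :: "'n set"
  assumes sym: "transpose A = A" and "finite K"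
  shows "\<exists>v lam. (\<forall>i\<in>K. norm (v i) = 1 \<and> A *v v i = lam i *\<^sub>R v i)
                 \<and> (\<forall>i\<in>K. \<forall>j\<in>K. i \<noteq> j \<longrightarrow> v i \<bullet> v j = 0)"
  using \<open>finite K\<close>
proof (induction K rule: finite_induct)
  case (insert j K)
  from insert.IH obtain v lam where v: "\<forall>i\<in>K. norm (v i) = 1 \<and> A *v v i = lam i *\<^sub>R v i"
    and orth: "\<forall>i\<in>K. \<forall>j\<in>K. i \<noteq> j \<longrightarrow> v i \<bullet> v j = 0"
    by iprover
  have "card K < card (insert j K)"
    using insert.hyps by simp
  also have "\<dots> \<le> CARD('n)"
    by (rule card_mono) auto
  finally obtain u where u: "norm u = 1" "\<And>i. i \<in> K \<Longrightarrow> v i \<bullet> u = 0" "A *v u = (u \<bullet> (A *v u)) *\<^sub>R u"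
    using symmetric_eigenvector_orthogonal[OF sym insert.hyps(1), of v lam] v by blast
  show ?case
    by (rule exI[of _ "v(j := u)"], rule exI[of _ "lam(j := u \<bullet> (A *v u))"])
       (use v orth u insert.hyps(2) in \<open>auto simp: inner_commute\<close>)
qed simp

lemma transpose_matrix_mult_entry: "(transpose U ** B) $ i $ j = column i U \<bullet> column j (B :: real^'n^'n)"
  by (simp add: matrix_matrix_mult_def transpose_def column_def inner_vec_def)

lemma column_matrix_mult: "column j (A ** U) = A *v column j (U :: real^'n^'n)"
  by (simp add: matrix_matrix_mult_def matrix_vector_mult_def column_def vec_eq_iff)

theorem symmetric_matrix_orthogonally_diagonalisable:
  fixes A :: "real^'n^'n"
  assumes "transpose A = A"
  shows "\<exists>ev U. orthogonal_matrix U \<and> transpose U ** A ** U = (\<chi> i j. if i = j then ev i else 0)"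
proof -
  obtain v :: "'n \<Rightarrow> real^'n" and lam
    where "(\<forall>i\<in>UNIV. norm (v i) = 1 \<and> A *v v i = lam i *\<^sub>R v i) \<and> (\<forall>i\<in>UNIV. \<forall>j\<in>UNIV. i \<noteq> j \<longrightarrow> v i \<bullet> v j = 0)"
    using symmetric_orthonormal_eigenvectors[OF assms finite_class.finite_UNIV] by iprover
  then have v: "\<And>i. norm (v i) = 1" "\<And>i. A *v v i = lam i *\<^sub>R v i"
    and orth: "\<And>i j. i \<noteq> j \<Longrightarrow> v i \<bullet> v j = 0"
    by auto
  define U where "U = (\<chi> r c. v c $ r)"
  have col: "column c U = v c" for c
    by (simp add: U_def column_def vec_eq_iff)
  have "orthogonal_matrix U"
    unfolding orthogonal_matrix_orthonormal_columns col using v orth by (auto simp: orthogonal_def)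
  moreover have "transpose U ** A ** U = (\<chi> i j. if i = j then lam i else 0)"
  proof -
    have "(transpose U ** (A ** U)) $ i $ j = (if i = j then lam i else 0)" for i j
      unfolding transpose_matrix_mult_entry column_matrix_mult col v(2)
      using v(1)[of i] orth[of i j] by (auto simp: dot_square_norm)
    then show ?thesis
      by (simp add: matrix_mul_assoc vec_eq_iff)
  qed
  ultimately show ?thesis
    by blast
qed

section \<open>Singular values\<close>

lemma norm_matrix_diagonalised:
  fixes T U :: "real^'n^'n"
  assumes "transpose U ** (transpose T ** T) ** U = (\<chi> i j. if i = j then ev i else 0)"
  shows "norm (T *v (U *v w)) ^ 2 = (\<Sum>i\<in>UNIV. ev i * (w $ i) ^ 2)"
proof -
  have "norm (T *v (U *v w)) ^ 2 = ((T ** U) *v w) \<bullet> ((T ** U) *v w)"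
    by (simp add: matrix_vector_mul_assoc power2_norm_eq_inner)
  also have "\<dots> = (transpose (T ** U) *v ((T ** U) *v w)) \<bullet> w"
    by (rule transpose_mult_inner[symmetric])
  also have "transpose (T ** U) *v ((T ** U) *v w) = (\<chi> i j. if i = j then ev i else 0) *v w"
    by (simp add: matrix_vector_mul_assoc matrix_transpose_mul matrix_mul_assoc assms[symmetric]
        del: transpose_matrix_vector)
  also have "\<dots> = (\<chi> i. ev i * w $ i)"
  proof -
    have "(if i = j then ev i else 0) * w $ j = (if j = i then ev i * w $ j else 0)" for i j
      by simp
    then show ?thesis
      by (simp add: matrix_vector_mult_def vec_eq_iff)
  qed
  finally show ?thesis
    by (simp add: inner_vec_def power2_eq_square mult_ac)
qed

lemma sq_singular_values_diagonalise:
  fixes T :: "real^'n^'n"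
  obtains U where "orthogonal_matrix U"
    "transpose U ** (transpose T ** T) ** U = (\<chi> i j. if i = j then sq_singular_values T i else 0)"
proof -
  have "transpose (transpose T ** T) = transpose T ** T"
    by (simp add: matrix_transpose_mul)
  then show ?thesis
    using someI_ex[OF symmetric_matrix_orthogonally_diagonalisable] that
    unfolding sq_singular_values_def by blast
qed

lemma sq_singular_values_nonneg: "0 \<le> sq_singular_values T i"
proof -
  obtain U where "transpose U ** (transpose T ** T) ** U = (\<chi> i j. if i = j then sq_singular_values T i else 0)"
    using sq_singular_values_diagonalise by blast
  then have "norm (T *v (U *v axis i 1)) ^ 2 = (\<Sum>j\<in>UNIV. sq_singular_values T j * (axis i 1 $ j) ^ 2)"
    by (rule norm_matrix_diagonalised)
  also have "\<dots> = sq_singular_values T i"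
    by (simp add: axis_def if_distrib[of "\<lambda>x. _ * x ^ 2"] cong: if_cong)
  finally show ?thesis
    using zero_le_power2[of "norm (T *v (U *v axis i 1))"] by linarith
qed

lemma F_p_sq_singular_values:
  fixes T :: "real^'n^'n"
  shows "F_p p T = (\<integral>\<theta>. (\<Sum>i\<in>UNIV. sq_singular_values T i * (\<theta> $ i) ^ 2) ^ p \<partial>sphere_measure)"
proof -
  obtain U where U: "orthogonal_matrix U"
    and D: "transpose U ** (transpose T ** T) ** U = (\<chi> i j. if i = j then sq_singular_values T i else 0)"
    using sq_singular_values_diagonalise by blast
  define G where "G w = (\<Sum>i\<in>UNIV. sq_singular_values T i * (w $ i) ^ 2) ^ p" for w :: "real^'n"
  have "norm (T *v \<theta>) ^ (2 * p) = G (transpose U *v \<theta>)" for \<theta>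
  proof -
    have "U *v (transpose U *v \<theta>) = \<theta>"
      using U by (simp add: matrix_vector_mul_assoc orthogonal_matrix_def del: transpose_matrix_vector)
    then show ?thesis
      using norm_matrix_diagonalised[OF D, of "transpose U *v \<theta>"] by (simp add: G_def power_mult)
  qed
  then have "F_p p T = (\<integral>\<theta>. G (transpose U *v \<theta>) \<partial>sphere_measure)"
    by (simp add: F_p_def del: transpose_matrix_vector)
  also have "\<dots> = (\<integral>\<theta>. G \<theta> \<partial>sphere_measure)"
    using U by (intro sphere_integral_orthogonal_transformation)
      (auto simp: G_def orthogonal_transformation_matrix orthogonal_matrix_transpose intro!: continuous_intros
       simp del: transpose_matrix_vector)
  finally show ?thesis
    by (simp add: G_def)
qed

lemma powr_inverse_power:
  fixes x :: real
  assumes "0 \<le> x" "0 < n"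
  shows "(x powr (1 / real n)) ^ n = x"
proof (cases "x = 0")
  case False
  then have "(x powr (1 / real n)) ^ n = x powr (1 / real n * real n)"
    using assms by (simp add: powr_realpow[symmetric] powr_powr)
  then show ?thesis
    using assms False by simp
qed (use assms in simp)

lemma schatten_power_sq_singular_values:
  assumes "0 < p"
  shows "schatten (2 * p) T ^ (2 * p) = (\<Sum>i\<in>UNIV. sq_singular_values T i ^ p)"
proof -
  have "singular_values T i ^ (2 * p) = sq_singular_values T i ^ p" for i
    using sq_singular_values_nonneg[of T i] by (simp add: singular_values_def power_mult)
  moreover have "((\<Sum>i\<in>UNIV. sq_singular_values T i ^ p) powr (1 / real (2 * p))) ^ (2 * p)
      = (\<Sum>i\<in>UNIV. sq_singular_values T i ^ p)"
    using assms by (intro powr_inverse_power) (auto intro: sum_nonneg simp: sq_singular_values_nonneg)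
  ultimately show ?thesis
    unfolding schatten_def by simp
qed

lemma hs_norm_square: "hs_norm T ^ 2 = (\<Sum>i\<in>UNIV. sq_singular_values T i)"
  using schatten_power_sq_singular_values[of 1 T] by (simp add: hs_norm_def)

lemma power_weighted_sum_le:
  fixes x w :: "'a \<Rightarrow> real"
  assumes "finite S" and x: "\<And>i. 0 \<le> x i" and w: "\<And>i. 0 \<le> w i" and "sum w S \<le> 1" and "1 \<le> p"
  shows "(\<Sum>i\<in>S. x i * w i) ^ p \<le> (\<Sum>i\<in>S. x i ^ p * w i)"
proof (cases "sum w S = 0")
  case True
  then have "\<forall>i\<in>S. w i = 0"
    using w \<open>finite S\<close> by (simp add: sum_nonneg_eq_0_iff)
  then show ?thesis
    using \<open>1 \<le> p\<close> by (simp add: power_0_left)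
next
  case False
  define s where "s = sum w S"
  have "0 < s"
    using False w by (simp add: s_def order_neq_le_trans sum_nonneg)
  \<comment> \<open>Jensen's inequality for the normalised weights \<open>w i / s\<close>, and \<open>s ^ p \<le> s\<close> since \<open>s \<le> 1\<close>\<close>
  have "(\<Sum>i\<in>S. (w i / s) *\<^sub>R x i) ^ p \<le> (\<Sum>i\<in>S. w i / s * x i ^ p)"
    using convex_on_sum[OF \<open>finite S\<close> _ convex_on_power_nonneg, of "\<lambda>i. w i / s" x] \<open>0 < s\<close> w x False
    by (force simp: s_def sum_divide_distrib[symmetric])
  then have "(\<Sum>i\<in>S. x i * w i) ^ p \<le> s ^ p * (\<Sum>i\<in>S. x i ^ p * w i) / s"
    using \<open>0 < s\<close> by (simp add: sum_divide_distrib[symmetric] power_divide field_simps mult.commute)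
  also have "\<dots> \<le> s * (\<Sum>i\<in>S. x i ^ p * w i) / s"
    using \<open>0 < s\<close> \<open>sum w S \<le> 1\<close> \<open>1 \<le> p\<close> x w
    by (intro divide_right_mono mult_right_mono power_decreasing[of 1 p s, simplified] sum_nonneg)
       (auto simp: s_def)
  finally show ?thesis
    using \<open>0 < s\<close> by simp
qed

lemma sphere_integral_coordinate_square:
  fixes i :: "'n::finite"
  shows "(\<integral>\<theta>. (\<theta> $ i) ^ 2 \<partial>sphere_measure) = 1 / real CARD('n)"
  using sphere_integral_inner_square[of "axis i 1 :: real^'n"] by (simp add: inner_axis')

lemma F_p_le_schatten:
  fixes T :: "real^'n^'n"
  assumes "1 \<le> p"
  shows "F_p p T \<le> schatten (2 * p) T ^ (2 * p) / real CARD('n)"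
proof -
  let ?ev = "sq_singular_values T"
  have "F_p p T \<le> (\<integral>\<theta>. (\<Sum>i\<in>UNIV. ?ev i ^ p * (\<theta> $ i) ^ 2) \<partial>(sphere_measure :: (real^'n) measure))"
    unfolding F_p_sq_singular_values
  proof (rule integral_mono_AE)
    show "AE \<theta> in sphere_measure. (\<Sum>i\<in>UNIV. ?ev i * (\<theta> $ i)\<^sup>2) ^ p \<le> (\<Sum>i\<in>UNIV. ?ev i ^ p * (\<theta> $ i)\<^sup>2)"
      using AE_sphere_norm_le_1
    proof (rule AE_mp, intro AE_I2 impI)
      fix \<theta> :: "real^'n"
      assume "norm \<theta> \<le> 1"
      then have "(\<Sum>i\<in>UNIV. (\<theta> $ i)\<^sup>2) \<le> 1"
        by (simp add: norm_vec_def L2_set_def sum_nonneg real_sqrt_le_1_iff)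
      then show "(\<Sum>i\<in>UNIV. ?ev i * (\<theta> $ i)\<^sup>2) ^ p \<le> (\<Sum>i\<in>UNIV. ?ev i ^ p * (\<theta> $ i)\<^sup>2)"
        using assms by (intro power_weighted_sum_le) (auto simp: sq_singular_values_nonneg)
    qed
  qed (auto intro!: integrable_sphere_measure continuous_intros)
  also have "\<dots> = (\<Sum>i\<in>UNIV. ?ev i ^ p) / real CARD('n)"
    by (simp add: Bochner_Integration.integral_sum integrable_sphere_measure continuous_intros
        sphere_integral_coordinate_square sum_divide_distrib)
  finally show ?thesis
    using assms by (simp add: schatten_power_sq_singular_values)
qed

lemma hs_norm_le_F_p:
  fixes T :: "real^'n^'n"
  shows "(hs_norm T ^ 2 / real CARD('n)) ^ p \<le> F_p p T"
proof -
  let ?g = "\<lambda>\<theta>::real^'n. \<Sum>i\<in>UNIV. sq_singular_values T i * (\<theta> $ i) ^ 2"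
  have "hs_norm T ^ 2 / real CARD('n) = (\<integral>\<theta>. ?g \<theta> \<partial>sphere_measure)"
    by (simp add: hs_norm_square Bochner_Integration.integral_sum integrable_sphere_measure continuous_intros
        sphere_integral_coordinate_square sum_divide_distrib)
  also have "(\<dots>) ^ p \<le> (\<integral>\<theta>. ?g \<theta> ^ p \<partial>sphere_measure)"
    by (rule sphere_integral_power_ge) (auto intro!: continuous_intros sum_nonneg simp: sq_singular_values_nonneg)
  finally show ?thesis
    by (simp add: F_p_sq_singular_values)
qed

lemma I_moment_pos:
  fixes \<Omega> :: "(real^'n) set"
  assumes "open \<Omega>" "bounded \<Omega>" "\<Omega> \<noteq> {}"
  shows "0 < I_moment k \<Omega>"
proof -
  obtain a where "a \<in> \<Omega>" "a \<noteq> 0"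
    using exists_nonzero_in_open assms by blast
  then show ?thesis
    unfolding I_moment_def using assms
    by (intro integral_pos_continuous_open[of _ _ a]) (auto intro!: continuous_intros)
qed

lemma vol_pos:
  fixes \<Omega> :: "(real^'n) set"
  assumes "open \<Omega>" "bounded \<Omega>" "\<Omega> \<noteq> {}"
  shows "0 < vol \<Omega>"
proof -
  have "\<Omega> \<in> lmeasurable"
    using assms by (intro bounded_set_imp_lmeasurable) auto
  then show ?thesis
    using I_moment_pos[OF assms, of 0] by (simp add: vol_def I_moment_def lmeasure_integral)
qed

lemma powr_volume_ratio:
  fixes V J J' q :: real
  assumes "0 < V" "0 < J" "J * J' = 1"
  shows "V powr (1 + 2 * q) / ((J' * V) powr q * (J * V) powr (1 + q)) = 1 / J"
proof -
  have "J' = 1 / J"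
    using assms by (simp add: eq_divide_eq mult.commute)
  then have "0 < J'"
    using assms by simp
  have JJ': "J powr q * J' powr q = 1"
    using powr_mult[of J J' q] assms \<open>0 < J'\<close> by simp
  have "(J' * V) powr q * (J * V) powr (1 + q) = J' powr q * V powr q * (J * V * (J powr q * V powr q))"
    using assms \<open>0 < J'\<close> by (simp add: powr_mult powr_add)
  also have "\<dots> = (J powr q * J' powr q) * J * (V * V powr q * V powr q)"
    by (simp only: mult_ac)
  also have "\<dots> = J * V powr (1 + q + q)"
    using assms by (simp only: JJ' powr_add powr_one)
  finally show ?thesis
    using assms by (simp add: add.assoc)
qed

theorem lemma6p1:
  fixes \<Omega> :: "(real^'n) set" and T :: "real^'n^'n" and p :: nat
  assumes "open \<Omega>" and "connected \<Omega>" and "\<Omega> \<noteq> {}" and "bounded \<Omega>"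
    and "p \<ge> 1" and "invertible T"
    and "admits_p_frames p \<Omega>"
  defines "d \<equiv> real CARD('n)"
  defines "R \<equiv> I_moment (2*p) ((\<lambda>x. T *v x) ` \<Omega>) / I_moment (2*p) \<Omega>
      * (vol \<Omega> powr (1 + 4 * real p / d)
         / (vol ((\<lambda>x. matrix_inv T *v x) ` \<Omega>) powr (2 * real p / d)
            * vol ((\<lambda>x. T *v x) ` \<Omega>) powr (1 + 2 * real p / d)))"
  shows "F_p p T = R
    \<and> (irreducible_isometry_group \<Omega> \<longrightarrow>
         1 / d ^ p * hs_norm T ^ (2*p) \<le> R \<and> R \<le> 1 / d * schatten (2*p) T ^ (2*p))"
proof -
  let ?J = "linear_image_factor (\<lambda>x. T *v x)" and ?J' = "linear_image_factor (\<lambda>x. matrix_inv T *v x)"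
  have surj: "surj (\<lambda>x. T *v x)" "surj (\<lambda>x. matrix_inv T *v x)"
    using surj_matrix_vector_mult matrix_inv_invertible[OF \<open>invertible T\<close>] by auto
  have JJ': "?J * ?J' = 1"
    by (rule linear_image_factor_matrix_inv[OF \<open>invertible T\<close>])
  then have "0 < ?J"
    using linear_image_factor_nonneg[of "\<lambda>x. T *v x"] by (cases "?J = 0") auto
  moreover have "0 < vol \<Omega>" "0 < I_moment (2 * p) \<Omega>"
    using vol_pos I_moment_pos \<open>open \<Omega>\<close> \<open>bounded \<Omega>\<close> \<open>\<Omega> \<noteq> {}\<close> by blast+
  moreover have "I_moment (2 * p) ((\<lambda>x. T *v x) ` \<Omega>) = ?J * (I_moment (2 * p) \<Omega> * F_p p T)"
    using I_moment_matrix_image[OF surj(1) \<open>open \<Omega>\<close> \<open>bounded \<Omega>\<close>]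
      integral_norm_power_matrix[OF \<open>admits_p_frames p \<Omega>\<close> \<open>open \<Omega>\<close> \<open>bounded \<Omega>\<close>] by simp
  moreover have "vol ((\<lambda>x. T *v x) ` \<Omega>) = ?J * vol \<Omega>" "vol ((\<lambda>x. matrix_inv T *v x) ` \<Omega>) = ?J' * vol \<Omega>"
    unfolding vol_def using surj \<open>open \<Omega>\<close> \<open>bounded \<Omega>\<close>
    by (intro measure_linear_image_factor matrix_vector_mul_linear; simp)+
  moreover have "vol \<Omega> powr (1 + 4 * real p / d)
      / ((?J' * vol \<Omega>) powr (2 * real p / d) * (?J * vol \<Omega>) powr (1 + 2 * real p / d)) = 1 / ?J"
    using powr_volume_ratio[OF \<open>0 < vol \<Omega>\<close> \<open>0 < ?J\<close> JJ', of "2 * real p / d"] by simp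
  ultimately have "R = F_p p T"
    unfolding R_def using \<open>0 < ?J\<close> by simp
  moreover have "1 / d ^ p * hs_norm T ^ (2 * p) \<le> F_p p T"
    using hs_norm_le_F_p[of T p] by (simp add: d_def power_mult power_divide)
  moreover have "F_p p T \<le> 1 / d * schatten (2 * p) T ^ (2 * p)"
    using F_p_le_schatten[OF \<open>1 \<le> p\<close>, of T] by (simp add: d_def)
  ultimately show ?thesis
    by simp
qed

end
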